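(* Let $n\ge1$, $0<\beta<1$, let $\Psi\in\mathcal{S}(\mathbb{R}^{n})$ with $\Psi(0)=1$, and let $g\in C^{0}((0,\beta)^{n},\mathbb{R}_{+})$ satisfy: (i) $\lim_{|x|\to 0^{+}} g(x)/|x| = 0$; (ii) for each $i\in\{1,\dots,n\}$, the map $x_i\mapsto g(x_1,\dots,x_i,\dots,x_n)$ is increasing on $(0,\beta)$. Let $A$ be an operator defined on $\mathcal{S}(\mathbb{R}^n)$ with values in functions on $\mathbb{R}^n$ such that, at least for $x\in(0,\beta)^{n}$, $$(Au)(x)=\int_{\mathbb{R}^{n}}u(g(x)z)\,\mathcal{F}\Psi(z)\,dz,\qquad u\in\mathcal{S}(\mathbb{R}^{n}).$$ Then $A$ cannot be extended to a bounded operator on $L^{2}(\mathbb{R}^{n})$, i.e. there is no constant $C>0$ with $\|Au\|_{L^2}\le C\|u\|_{L^2}$ for all $u\in\mathcal{S}(\mathbb{R}^n)$.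
   Context: $(0,\beta)^{n}=\prod_{j=1}^{n}(0,\beta)$. $\mathbb{R}_+$ denotes the nonnegative real numbers. $\mathcal{F}$ is the Fourier transform, $\mathcal{F}\Psi(z)=(2\pi)^{-n/2}\int e^{-iz\cdot\theta}\Psi(\theta)\,d\theta$. *)

theory Defs
  imports "HOL-Analysis.Analysis"
begin

definition partial_deriv :: "'n::finite \<Rightarrow> (real^'n \<Rightarrow> complex) \<Rightarrow> real^'n \<Rightarrow> complex" where
  "partial_deriv i f x = vector_derivative (\<lambda>t. f (x + t *\<^sub>R axis i 1)) (at 0)"

text \<open>Iterated partial derivative; a list of indices encodes a multi-index.\<close>
fun iter_partial :: "'n::finite list \<Rightarrow> (real^'n \<Rightarrow> complex) \<Rightarrow> real^'n \<Rightarrow> complex" where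
  "iter_partial [] f = f"
| "iter_partial (i # is) f = partial_deriv i (iter_partial is f)"

definition schwartz :: "(real^'n::finite \<Rightarrow> complex) \<Rightarrow> bool" where
  "schwartz f \<longleftrightarrow>
     (\<forall>is i x. (\<lambda>t. iter_partial is f (x + t *\<^sub>R axis i 1)) differentiable (at 0)) \<and>
     (\<forall>is. continuous_on UNIV (iter_partial is f)) \<and>
     (\<forall>is (m::nat). \<exists>C. \<forall>x. (1 + norm x) ^ m * norm (iter_partial is f x) \<le> C)"

definition fourier :: "(real^'n::finite \<Rightarrow> complex) \<Rightarrow> real^'n \<Rightarrow> complex" where
  "fourier \<Psi> z = complex_of_real ((2 * pi) powr (- real CARD('n) / 2)) *
      integral UNIV (\<lambda>\<theta>. exp (- (\<i> * complex_of_real (z \<bullet> \<theta>))) * \<Psi> \<theta>)"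

definition L2_norm_sq :: "(real^'n::finite \<Rightarrow> complex) \<Rightarrow> ennreal" where
  "L2_norm_sq f = (\<integral>\<^sup>+ x. ennreal ((norm (f x))\<^sup>2) \<partial>lborel)"

definition open_cube :: "real \<Rightarrow> (real^'n::finite) set" where
  "open_cube \<beta> = {x. \<forall>i. 0 < x $ i \<and> x $ i < \<beta>}"

end

theory Submission
  imports Defs "HOL-Probability.Probability"
begin

text \<open>Test \<open>A\<close> on the Gaussians \<open>u(y) = exp (- c |y|\<^sup>2)\<close>. Then \<open>A u (x) = \<Phi> (c g(x)\<^sup>2)\<close> with
  \<open>\<Phi> (s) = \<integral> exp (- s |z|\<^sup>2) \<F>\<Psi>(z) dz\<close>, which is continuous at \<open>s = 0\<close> with
  \<open>\<Phi> (0) = (2\<pi>)\<^sup>n\<^sup>/\<^sup>2 \<Psi>(0) \<noteq> 0\<close> (Fourier inversion at the origin, obtained by Fubini and the Fourier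
  transform of Gaussians). Since \<open>g(x) = o(|x|)\<close>, for \<open>M\<close> large there is a cube \<open>(0,r)\<^sup>n\<close> on which
  \<open>c g(x)\<^sup>2\<close> stays small for the Gaussian of width \<open>r/M\<close>, i.e. \<open>c = \<pi> M\<^sup>2 / (2 r\<^sup>2)\<close>; there \<open>|A u| \<ge> \<delta> > 0\<close>.
  Hence \<open>\<parallel>A u\<parallel>\<^sup>2 \<ge> \<delta>\<^sup>2 r\<^sup>n\<close> while \<open>\<parallel>u\<parallel>\<^sup>2 = (r/M)\<^sup>n\<close>, contradicting \<open>\<parallel>A u\<parallel> \<le> C \<parallel>u\<parallel>\<close> once
  \<open>M > C\<^sup>2/\<delta>\<^sup>2\<close>.\<close>

section \<open>Integrals over Euclidean spaces\<close>

lemma lborel_integral_prod_Basis: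
  fixes f :: "'a::euclidean_space \<Rightarrow> real \<Rightarrow> 'c::{real_normed_field,banach,second_countable_topology}"
  assumes int: "\<And>b. b \<in> Basis \<Longrightarrow> integrable lborel (f b)"
  shows "integrable lborel (\<lambda>x::'a. \<Prod>b\<in>Basis. f b (x \<bullet> b))"
    and "(\<integral>x. (\<Prod>b\<in>Basis. f b (x \<bullet> b)) \<partial>(lborel::'a measure)) = (\<Prod>b\<in>Basis. integral\<^sup>L lborel (f b))"
proof -
  interpret product_sigma_finite "\<lambda>_::'a. (lborel::real measure)" by standard
  let ?T = "(\<lambda>f. \<Sum>b\<in>Basis. f b *\<^sub>R b) :: ('a \<Rightarrow> real) \<Rightarrow> 'a"
  have T_measurable: "?T \<in> measurable (\<Pi>\<^sub>M b\<in>Basis. lborel) borel" by measurable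
  have [measurable]: "f b \<in> borel_measurable borel" if "b \<in> Basis" for b
    using int[OF that] by (simp add: borel_measurable_integrable)
  have prod_measurable: "(\<lambda>x::'a. \<Prod>b\<in>Basis. f b (x \<bullet> b)) \<in> borel_measurable borel" by measurable
  have comp: "(\<Prod>b\<in>Basis. f b (?T x \<bullet> b)) = (\<Prod>b\<in>Basis. f b (x b))" for x
    by (intro prod.cong refl) (simp add: inner_sum_left inner_Basis if_distrib cong: if_cong)
  have "integrable (\<Pi>\<^sub>M b\<in>Basis. lborel) (\<lambda>x. \<Prod>b\<in>Basis. f b (x b))"
    by (rule product_integrable_prod) (auto intro: int)
  then show "integrable lborel (\<lambda>x::'a. \<Prod>b\<in>Basis. f b (x \<bullet> b))"
    by (subst lborel_eq, subst integrable_distr_eq[OF T_measurable prod_measurable]) (simp add: comp)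
  show "(\<integral>x. (\<Prod>b\<in>Basis. f b (x \<bullet> b)) \<partial>(lborel::'a measure)) = (\<Prod>b\<in>Basis. integral\<^sup>L lborel (f b))"
    by (subst lborel_eq, subst integral_distr[OF T_measurable prod_measurable])
       (simp add: comp product_integral_prod int)
qed

lemma nn_integral_lborel_affine:
  fixes f :: "'a::euclidean_space \<Rightarrow> ennreal"
  assumes [measurable]: "f \<in> borel_measurable borel" and c: "c \<noteq> 0"
  shows "(\<integral>\<^sup>+x. f x \<partial>lborel) = ennreal (\<bar>c\<bar>^DIM('a)) * (\<integral>\<^sup>+x. f (t + c *\<^sub>R x) \<partial>lborel)"
  by (subst lborel_affine[OF c, of t])
     (simp add: nn_integral_density nn_integral_distr nn_integral_cmult)

lemma lborel_integrable_affine: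
  fixes f :: "'a::euclidean_space \<Rightarrow> 'b::{banach, second_countable_topology}"
  assumes f: "integrable lborel f" and c: "c \<noteq> 0"
  shows "integrable lborel (\<lambda>x. f (t + c *\<^sub>R x))"
  using f f[THEN borel_measurable_integrable] c unfolding integrable_iff_bounded
  by (subst (asm) nn_integral_lborel_affine[where c=c and t=t]) (auto simp: ennreal_mult_less_top)

lemma lborel_integrable_affine_iff:
  fixes f :: "'a::euclidean_space \<Rightarrow> 'b::{banach, second_countable_topology}"
  shows "c \<noteq> 0 \<Longrightarrow> integrable lborel (\<lambda>x. f (t + c *\<^sub>R x)) \<longleftrightarrow> integrable lborel f"
  using lborel_integrable_affine[of f c t]
    lborel_integrable_affine[of "\<lambda>x. f (t + c *\<^sub>R x)" "1/c" "-t/\<^sub>R c"]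
  by (auto simp add: field_simps scaleR_add_right)

lemma lborel_integral_affine:
  fixes f :: "'a::euclidean_space \<Rightarrow> 'b::{banach, second_countable_topology}" and c :: real
  assumes c: "c \<noteq> 0"
  shows "(\<integral>x. f x \<partial>lborel) = (\<bar>c\<bar>^DIM('a)) *\<^sub>R (\<integral>x. f (t + c *\<^sub>R x) \<partial>lborel)"
proof cases
  assume f[measurable]: "integrable lborel f"
  then show ?thesis
    using c f[THEN borel_measurable_integrable] lborel_integrable_affine[OF f c, of t]
    by (subst lborel_affine[OF c, of t]) (simp add: integral_density integral_distr)
next
  assume "\<not> integrable lborel f"
  with c show ?thesis
    by (simp add: lborel_integrable_affine_iff not_integrable_integral_eq)
qed

lemma integrable_inverse_1_plus_square_lborel: "integrable lborel (\<lambda>t::real. inverse (1 + t\<^sup>2))"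
  using integrable_inverse_1_plus_square by (simp add: set_integrable_def)

lemma integrable_inverse_prod_1_plus_square:
  "integrable lborel (\<lambda>x::'a::euclidean_space. \<Prod>b\<in>Basis. inverse (1 + (x \<bullet> b)\<^sup>2))"
  by (rule lborel_integral_prod_Basis(1)) (rule integrable_inverse_1_plus_square_lborel)

lemma integrable_inverse_power_1_plus_norm:
  "integrable lborel (\<lambda>x::'a::euclidean_space. 1 / (1 + norm x)^(2*DIM('a)))"
proof (rule Bochner_Integration.integrable_bound[OF integrable_inverse_prod_1_plus_square])
  show "(\<lambda>x::'a. 1 / (1 + norm x)^(2*DIM('a))) \<in> borel_measurable lborel" by measurable
  show "AE x in lborel. norm (1 / (1 + norm (x::'a))^(2*DIM('a))) \<le> norm (\<Prod>b\<in>Basis. inverse (1 + (x \<bullet> b)\<^sup>2))"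
  proof (rule AE_I2)
    fix x :: 'a
    have "(\<Prod>b\<in>Basis. 1 + (x \<bullet> b)\<^sup>2) \<le> (\<Prod>b\<in>(Basis::'a set). (1 + norm x)\<^sup>2)"
    proof (rule prod_mono, safe)
      fix b :: 'a assume b: "b \<in> Basis"
      have "(x \<bullet> b)\<^sup>2 \<le> (norm x)\<^sup>2"
        using Basis_le_norm[OF b] by (metis abs_le_square_iff abs_norm_cancel)
      then show "1 + (x \<bullet> b)\<^sup>2 \<le> (1 + norm x)\<^sup>2"
        unfolding power2_sum power_one using norm_ge_zero[of x] by linarith
    qed (auto intro: add_nonneg_nonneg)
    also have "\<dots> = (1 + norm x)^(2*DIM('a))" by (simp add: power_mult[symmetric] mult.commute)
    finally have le: "(\<Prod>b\<in>Basis. 1 + (x \<bullet> b)\<^sup>2) \<le> (1 + norm x)^(2*DIM('a))" .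
    have pos: "0 < (\<Prod>b\<in>(Basis::'a set). 1 + (x \<bullet> b)\<^sup>2)"
      by (intro prod_pos) (auto intro: add_pos_nonneg)
    have "1 / (1 + norm x)^(2*DIM('a)) \<le> 1 / (\<Prod>b\<in>Basis. 1 + (x \<bullet> b)\<^sup>2)"
      using le pos by (intro divide_left_mono) auto
    also have "\<dots> = (\<Prod>b\<in>Basis. inverse (1 + (x \<bullet> b)\<^sup>2))"
      by (simp add: prod_inversef[symmetric] divide_inverse)
    finally show "norm (1 / (1 + norm x)^(2*DIM('a))) \<le> norm (\<Prod>b\<in>Basis. inverse (1 + (x \<bullet> b)\<^sup>2))"
      using pos by (simp add: abs_mult)
  qed
qed

lemma Basis_vec_eq_axis: "(Basis :: (real^'n) set) = range (\<lambda>i. axis i 1)"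
  by (auto simp: Basis_vec_def)

lemma prod_Basis_vec: "(\<Prod>b\<in>(Basis::(real^'n) set). f (x \<bullet> b)) = (\<Prod>j\<in>UNIV. f (x $ j))"
  by (simp add: Basis_vec_eq_axis prod.reindex inj_on_def axis_eq_axis inner_axis)

lemma emeasure_lborel_cube:
  assumes "0 \<le> r"
  shows "emeasure lborel (box 0 ((\<chi> i. r) :: real^'n)) = ennreal (r ^ CARD('n))"
proof -
  have "\<forall>b\<in>(Basis :: (real^'n) set). (0::real^'n) \<bullet> b \<le> (\<chi> i. r) \<bullet> b"
    using assms by (auto simp: Basis_vec_eq_axis inner_axis)
  moreover have "(\<Prod>b\<in>(Basis::(real^'n) set). ((\<chi> i. r) - 0) \<bullet> b) = r ^ CARD('n)"
    using prod_Basis_vec[where f="\<lambda>t. t" and x="(\<chi> i. r) - (0::real^'n)"] by simp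
  ultimately show ?thesis by (simp add: emeasure_lborel_box_eq)
qed

section \<open>Gaussian integrals\<close>

lemma gaussian_fourier_integral_real:
  fixes a z :: real assumes a: "0 < a"
  shows "integrable lborel (\<lambda>x. complex_of_real (exp (- a * x\<^sup>2)) * exp (- (\<i> * complex_of_real (z * x))))"
    and "(\<integral>x. complex_of_real (exp (- a * x\<^sup>2)) * exp (- (\<i> * complex_of_real (z * x))) \<partial>lborel)
          = complex_of_real (sqrt (pi / a) * exp (- z\<^sup>2 / (4 * a)))"
proof -
  define c where "c = 1 / sqrt (2 * a)"
  have c: "c > 0" using a by (simp add: c_def)
  have c_sq: "c\<^sup>2 = 1 / (2 * a)" using a by (simp add: c_def power_divide)
  let ?f = "\<lambda>x. complex_of_real (exp (- a * x\<^sup>2)) * exp (- (\<i> * complex_of_real (z * x)))"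
  have char_eq: "char std_normal_distribution t
      = (\<integral>y. std_normal_density y *\<^sub>R exp (\<i> * complex_of_real (t * y)) \<partial>lborel)" for t
    unfolding char_def by (subst integral_density) auto
  have integrable_char: "integrable lborel (\<lambda>y. std_normal_density y *\<^sub>R exp (\<i> * complex_of_real (t * y)))" for t
  proof -
    have "integrable std_normal_distribution (\<lambda>y. exp (\<i> * complex_of_real (t * y)))"
      using real_dist_normal_dist prob_space_normal_density
      by (intro prob_space.integrable_iexp) auto
    then show ?thesis by (subst (asm) integrable_density) auto
  qed
  \<comment> \<open>The substitution \<open>x = c y\<close> turns the integrand into the standard normal density.\<close>
  have subst: "?f (0 + c * y) = complex_of_real (sqrt (2*pi))
      * (std_normal_density y *\<^sub>R exp (\<i> * complex_of_real ((- z * c) * y)))" for y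
  proof -
    have "a * (c * y)\<^sup>2 = y\<^sup>2 / 2" using a by (simp add: power_mult_distrib c_sq)
    then show ?thesis by (simp add: std_normal_density_def scaleR_conv_of_real mult_ac)
  qed
  have "integrable lborel (\<lambda>y. ?f (0 + c * y))"
    unfolding subst by (intro integrable_mult_right integrable_char)
  then show "integrable lborel ?f"
    using lborel_integrable_real_affine_iff[where c=c and t=0 and f="?f"] c by simp
  have "(\<integral>x. ?f x \<partial>lborel) = c *\<^sub>R (\<integral>y. ?f (0 + c * y) \<partial>lborel)"
    using lborel_integral_real_affine[where c=c and t=0 and f="?f"] c by simp
  also have "\<dots> = c *\<^sub>R (complex_of_real (sqrt (2*pi)) * char std_normal_distribution (- z * c))"
    by (simp only: subst char_eq integral_mult_right_zero)
  also have "\<dots> = complex_of_real (c * sqrt (2*pi) * exp (- (z * c)\<^sup>2 / 2))"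
    by (simp add: char_std_normal_distribution scaleR_conv_of_real)
  also have "c * sqrt (2*pi) = sqrt (pi / a)"
    using a by (simp add: c_def real_sqrt_divide real_sqrt_mult)
  also have "- (z * c)\<^sup>2 / 2 = - z\<^sup>2 / (4 * a)"
    using a by (simp add: power_mult_distrib c_sq)
  finally show "(\<integral>x. ?f x \<partial>lborel) = complex_of_real (sqrt (pi / a) * exp (- z\<^sup>2 / (4 * a)))" .
qed

lemma gaussian_fourier_integral:
  fixes a :: real and z :: "'a::euclidean_space" assumes a: "0 < a"
  shows "integrable lborel (\<lambda>x::'a. complex_of_real (exp (- a * (x \<bullet> x))) * exp (- (\<i> * complex_of_real (z \<bullet> x))))"
    and "(\<integral>x. complex_of_real (exp (- a * (x \<bullet> x))) * exp (- (\<i> * complex_of_real (z \<bullet> x))) \<partial>lborel)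
          = complex_of_real (sqrt (pi / a) ^ DIM('a) * exp (- (z \<bullet> z) / (4 * a)))"
proof -
  let ?f = "\<lambda>b t. complex_of_real (exp (- a * t\<^sup>2)) * exp (- (\<i> * complex_of_real ((z \<bullet> b) * t)))"
  have ib: "integrable lborel (?f b)" for b by (rule gaussian_fourier_integral_real(1)[OF a])
  have split: "complex_of_real (exp (- a * (x \<bullet> x))) * exp (- (\<i> * complex_of_real (z \<bullet> x)))
      = (\<Prod>b\<in>Basis. ?f b (x \<bullet> b))" for x :: 'a
  proof -
    have "exp (- a * (x \<bullet> x)) = (\<Prod>b\<in>(Basis::'a set). exp (- a * (x \<bullet> b)\<^sup>2))"
      by (subst euclidean_inner) (simp add: sum_distrib_left exp_sum power2_eq_square flip: sum_negf)
    moreover have "exp (- (\<i> * complex_of_real (z \<bullet> x)))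
        = (\<Prod>b\<in>(Basis::'a set). exp (- (\<i> * complex_of_real ((z \<bullet> b) * (x \<bullet> b)))))"
      by (subst euclidean_inner) (simp add: sum_distrib_left exp_sum flip: sum_negf)
    ultimately show ?thesis by (simp add: prod.distrib)
  qed
  show "integrable lborel (\<lambda>x::'a. complex_of_real (exp (- a * (x \<bullet> x))) * exp (- (\<i> * complex_of_real (z \<bullet> x))))"
    unfolding split by (rule lborel_integral_prod_Basis(1)[OF ib])
  have "(\<integral>x. complex_of_real (exp (- a * (x \<bullet> x))) * exp (- (\<i> * complex_of_real (z \<bullet> x))) \<partial>lborel)
      = (\<Prod>b\<in>(Basis::'a set). complex_of_real (sqrt (pi / a) * exp (- (z \<bullet> b)\<^sup>2 / (4 * a))))"
    unfolding split by (simp only: lborel_integral_prod_Basis(2)[OF ib] gaussian_fourier_integral_real(2)[OF a])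
  also have "\<dots> = complex_of_real (sqrt (pi / a) ^ DIM('a) * exp (- (z \<bullet> z) / (4 * a)))"
    by (subst euclidean_inner[of z z])
       (simp add: prod.distrib exp_sum power2_eq_square sum_divide_distrib flip: sum_negf)
  finally show "(\<integral>x. complex_of_real (exp (- a * (x \<bullet> x))) * exp (- (\<i> * complex_of_real (z \<bullet> x))) \<partial>lborel)
      = complex_of_real (sqrt (pi / a) ^ DIM('a) * exp (- (z \<bullet> z) / (4 * a)))" .
qed

lemma gaussian_integral:
  fixes a :: real assumes a: "0 < a"
  shows "integrable lborel (\<lambda>x::'a::euclidean_space. exp (- a * (x \<bullet> x)))"
    and "(\<integral>x. exp (- a * (x \<bullet> x)) \<partial>(lborel::'a measure)) = sqrt (pi / a) ^ DIM('a)"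
    and "(\<integral>\<^sup>+x. ennreal (exp (- a * (x \<bullet> x))) \<partial>(lborel::'a measure)) = ennreal (sqrt (pi / a) ^ DIM('a))"
proof -
  have "integrable lborel (\<lambda>x::'a. complex_of_real (exp (- a * (x \<bullet> x))))"
    using gaussian_fourier_integral(1)[OF a, of 0] by simp
  then show integrable: "integrable lborel (\<lambda>x::'a::euclidean_space. exp (- a * (x \<bullet> x)))"
    by (simp add: complex_of_real_integrable_eq)
  have "complex_of_real (\<integral>x. exp (- a * (x \<bullet> x)) \<partial>(lborel::'a measure)) = complex_of_real (sqrt (pi / a) ^ DIM('a))"
    using gaussian_fourier_integral(2)[OF a, of 0] by simp
  then show integral: "(\<integral>x. exp (- a * (x \<bullet> x)) \<partial>(lborel::'a measure)) = sqrt (pi / a) ^ DIM('a)"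
    by (simp only: of_real_eq_iff)
  show "(\<integral>\<^sup>+x. ennreal (exp (- a * (x \<bullet> x))) \<partial>(lborel::'a measure)) = ennreal (sqrt (pi / a) ^ DIM('a))"
    by (subst nn_integral_eq_integral[OF integrable]) (simp, simp only: integral)
qed
section \<open>Fourier integrals of rapidly decaying functions\<close>

definition fourier_kernel :: "'a::euclidean_space \<Rightarrow> 'a \<Rightarrow> complex" where
  "fourier_kernel z \<theta> = exp (- (\<i> * complex_of_real (z \<bullet> \<theta>)))"

lemma norm_fourier_kernel [simp]: "norm (fourier_kernel z \<theta>) = 1"
  by (simp add: fourier_kernel_def)

lemma fourier_kernel_add: "fourier_kernel z (a + b) = fourier_kernel z a * fourier_kernel z b"
  by (simp add: fourier_kernel_def inner_add_right distrib_left exp_add[symmetric] algebra_simps)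

lemma fourier_kernel_commute: "fourier_kernel z \<theta> = fourier_kernel \<theta> z"
  by (simp add: fourier_kernel_def inner_commute)

lemma measurable_fourier_kernel [measurable]: "fourier_kernel z \<in> borel_measurable borel"
  unfolding fourier_kernel_def by (intro borel_measurable_continuous_onI continuous_intros)

lemma measurable_fourier_kernel_pair [measurable]:
  "(\<lambda>p::('a::euclidean_space \<times> 'a). fourier_kernel (fst p) (snd p)) \<in> borel_measurable (lborel \<Otimes>\<^sub>M lborel)"
  unfolding lborel_prod measurable_lborel1 measurable_lborel2
  by (intro borel_measurable_continuous_onI) (simp add: fourier_kernel_def case_prod_beta continuous_intros)

text \<open>The exponent \<open>2 DIM('a)\<close> makes the weight \<open>(1 + |x|)^(-2 DIM('a))\<close> integrable, since it is
  dominated by \<open>\<Prod>\<^sub>i (1 + x\<^sub>i\<^sup>2)\<^sup>-\<^sup>1\<close>.\<close>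
definition fast_decay :: "('a::euclidean_space \<Rightarrow> complex) \<Rightarrow> bool" where
  "fast_decay f \<longleftrightarrow> continuous_on UNIV f \<and> (\<exists>C. \<forall>x. (1 + norm x)^(2*DIM('a)) * norm (f x) \<le> C)"

lemma fast_decay_bound:
  assumes "fast_decay (f::'a::euclidean_space \<Rightarrow> complex)"
  obtains C where "C \<ge> 0" "\<And>x. norm (f x) \<le> C * (1 / (1 + norm x)^(2*DIM('a)))"
proof -
  obtain C where C: "\<And>x. (1 + norm x)^(2*DIM('a)) * norm (f x) \<le> C"
    using assms by (auto simp: fast_decay_def)
  have "0 \<le> C" using C[of 0] by (smt (verit) mult_nonneg_nonneg norm_ge_zero zero_le_power)
  moreover have "norm (f x) \<le> C * (1 / (1 + norm x)^(2*DIM('a)))" for x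
  proof -
    have "0 < (1 + norm x)^(2*DIM('a))" by (simp add: add_pos_nonneg)
    then show ?thesis using C[of x] by (simp add: field_simps mult.commute)
  qed
  ultimately show ?thesis using that by blast
qed

lemma fast_decay_measurable: "fast_decay f \<Longrightarrow> f \<in> borel_measurable borel"
  by (auto simp: fast_decay_def intro: borel_measurable_continuous_onI)

lemma fast_decay_integrable:
  assumes "fast_decay (f::'a::euclidean_space \<Rightarrow> complex)"
  shows "integrable lborel f"
proof -
  obtain C where C: "C \<ge> 0" "\<And>x. norm (f x) \<le> C * (1 / (1 + norm x)^(2*DIM('a)))"
    using fast_decay_bound[OF assms] by blast
  show ?thesis
    by (rule Bochner_Integration.integrable_bound
          [OF integrable_mult_right[OF integrable_inverse_power_1_plus_norm, of C]])
       (use C fast_decay_measurable[OF assms] in auto)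
qed

lemma fast_decay_integrable_fourier_kernel:
  assumes "fast_decay (f::'a::euclidean_space \<Rightarrow> complex)"
  shows "integrable lborel (\<lambda>\<theta>. fourier_kernel z \<theta> * f \<theta>)"
  by (rule Bochner_Integration.integrable_bound[OF fast_decay_integrable[OF assms]])
     (use fast_decay_measurable[OF assms] in \<open>auto simp: norm_mult\<close>)

lemma measurable_fourier_integral:
  assumes "fast_decay (f :: 'a::euclidean_space \<Rightarrow> complex)"
  shows "(\<lambda>z. \<integral>\<theta>. fourier_kernel z \<theta> * f \<theta> \<partial>lborel) \<in> borel_measurable borel"
proof -
  have [measurable]: "f \<in> borel_measurable borel" using fast_decay_measurable[OF assms] .
  have "(\<lambda>p::('a \<times> 'a). fourier_kernel (fst p) (snd p) * f (snd p)) \<in> borel_measurable (lborel \<Otimes>\<^sub>M lborel)"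
    by measurable
  then have "case_prod (\<lambda>z \<theta>. fourier_kernel z \<theta> * f \<theta>) \<in> borel_measurable (lborel \<Otimes>\<^sub>M (lborel::'a measure))"
    by (simp add: case_prod_beta')
  from lborel.borel_measurable_lebesgue_integral[OF this] show ?thesis by simp
qed

lemma fourier_integral_translate:
  fixes f :: "'a::euclidean_space \<Rightarrow> complex"
  assumes f: "integrable lborel (\<lambda>\<theta>. fourier_kernel z \<theta> * f \<theta>)"
  shows "integrable lborel (\<lambda>\<theta>. fourier_kernel z \<theta> * f (\<theta> + v))"
    and "(\<integral>\<theta>. fourier_kernel z \<theta> * f (\<theta> + v) \<partial>lborel)
           = exp (\<i> * complex_of_real (z \<bullet> v)) * (\<integral>\<theta>. fourier_kernel z \<theta> * f \<theta> \<partial>lborel)"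
proof -
  have shifted: "fourier_kernel z \<theta> * f (\<theta> + v)
      = exp (\<i> * complex_of_real (z \<bullet> v)) * (fourier_kernel z (v + 1 *\<^sub>R \<theta>) * f (v + 1 *\<^sub>R \<theta>))" for \<theta>
  proof -
    have "exp (\<i> * complex_of_real (z \<bullet> v)) * fourier_kernel z v = 1"
      by (simp add: fourier_kernel_def exp_minus)
    then show ?thesis by (simp add: fourier_kernel_add add.commute mult_ac)
  qed
  show "integrable lborel (\<lambda>\<theta>. fourier_kernel z \<theta> * f (\<theta> + v))"
    unfolding shifted by (intro integrable_mult_right lborel_integrable_affine[OF f]) simp
  have "(\<integral>\<theta>. fourier_kernel z \<theta> * f \<theta> \<partial>lborel)
      = (\<integral>\<theta>. fourier_kernel z (v + 1 *\<^sub>R \<theta>) * f (v + 1 *\<^sub>R \<theta>) \<partial>lborel)"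
    using lborel_integral_affine[where c=1 and t=v and f="\<lambda>\<theta>. fourier_kernel z \<theta> * f \<theta>"] by simp
  then show "(\<integral>\<theta>. fourier_kernel z \<theta> * f (\<theta> + v) \<partial>lborel)
      = exp (\<i> * complex_of_real (z \<bullet> v)) * (\<integral>\<theta>. fourier_kernel z \<theta> * f \<theta> \<partial>lborel)"
    unfolding shifted by (simp add: integral_mult_right_zero)
qed

lemma has_vector_derivative_imp_difference_quotient_LIMSEQ:
  fixes f :: "real \<Rightarrow> complex"
  assumes "(f has_vector_derivative D) (at 0)"
  shows "(\<lambda>k. of_real (real (Suc k)) * (f (1 / real (Suc k)) - f 0)) \<longlonglongrightarrow> D"
proof -
  let ?h = "\<lambda>k::nat. 1 / real (Suc k)"
  have "filterlim ?h (at 0) sequentially"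
    by (rule filterlim_atI) (use LIMSEQ_Suc[OF lim_1_over_n[where 'a=real]] in auto)
  moreover have "((\<lambda>y. norm ((f y - f 0) - (y - 0) *\<^sub>R D) / norm (y - 0)) \<longlongrightarrow> 0) (at 0)"
    using assms by (simp add: has_vector_derivative_def has_derivative_iff_norm)
  ultimately have lim: "(\<lambda>k. norm ((f (?h k) - f 0) - (?h k - 0) *\<^sub>R D) / norm (?h k - 0)) \<longlonglongrightarrow> 0"
    by (rule filterlim_compose[rotated])
  have "norm ((f (?h k) - f 0) - (?h k - 0) *\<^sub>R D) / norm (?h k - 0)
      = norm (of_real (real (Suc k)) * (f (?h k) - f 0) - D)" for k
  proof -
    have "(1 + complex_of_nat k) \<noteq> 0" by (metis of_nat_Suc of_nat_eq_0_iff Suc_neq_Zero add.commute)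
    then have "of_real (real (Suc k)) * (f (?h k) - f 0) - D
        = of_real (real (Suc k)) * ((f (?h k) - f 0) - (?h k - 0) *\<^sub>R D)"
      by (simp add: algebra_simps scaleR_conv_of_real field_simps)
    moreover have "cmod (1 + complex_of_nat k) = 1 + real k"
      using norm_of_nat[of "Suc k", where 'a=complex] by (simp only: of_nat_Suc)
    ultimately show ?thesis by (simp add: norm_mult divide_inverse mult.commute)
  qed
  with lim show ?thesis by (simp add: tendsto_norm_zero_iff LIM_zero_cancel)
qed

lemma has_vector_derivative_iexp_linear:
  "((\<lambda>t. exp (\<i> * complex_of_real (t * c))) has_vector_derivative \<i> * complex_of_real c) (at 0)"
proof -
  have "((\<lambda>t. t * c) has_vector_derivative c) (at 0)"
    unfolding has_real_derivative_iff_has_vector_derivative[symmetric] by (auto intro!: derivative_eq_intros)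
  from vector_diff_chain_at[OF this has_vector_derivative_iexp] show ?thesis
    by (simp add: o_def scaleR_conv_of_real mult.commute)
qed

lemma has_vector_derivative_along_line:
  fixes f :: "'a::real_normed_vector \<Rightarrow> 'b::real_normed_vector" and t\<^sub>0 :: real
  assumes "\<And>x. ((\<lambda>t. f (x + t *\<^sub>R e)) has_vector_derivative f' x) (at 0)"
  shows "((\<lambda>t. f (x + t *\<^sub>R e)) has_vector_derivative f' (x + t\<^sub>0 *\<^sub>R e)) (at t\<^sub>0)"
proof -
  have shift: "((\<lambda>t. t - t\<^sub>0) has_vector_derivative 1) (at t\<^sub>0)" by (auto intro!: derivative_eq_intros)
  have derivative: "((\<lambda>s. f ((x + t\<^sub>0 *\<^sub>R e) + s *\<^sub>R e)) has_vector_derivative f' (x + t\<^sub>0 *\<^sub>R e))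
      (at ((\<lambda>t. t - t\<^sub>0) t\<^sub>0))"
    using assms by simp
  have "(x + t\<^sub>0 *\<^sub>R e) + (t - t\<^sub>0) *\<^sub>R e = x + t *\<^sub>R e" for t :: real
    by (simp add: algebra_simps)
  with vector_diff_chain_at[OF shift derivative] show ?thesis by (simp add: o_def)
qed

text \<open>A difference quotient of \<open>f\<close> is dominated by the decay of its derivative; the factor \<open>2^m\<close>
  absorbs the shift \<open>1 + |\<theta>| \<le> 2 (1 + |\<theta> + \<tau> e|)\<close> for \<open>0 \<le> \<tau> \<le> 1\<close>.\<close>
lemma difference_quotient_bound:
  fixes f f' :: "'a::euclidean_space \<Rightarrow> complex"
  assumes der: "\<And>x. ((\<lambda>t. f (x + t *\<^sub>R e)) has_vector_derivative f' x) (at 0)"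
    and bound: "\<And>x. norm (f' x) \<le> C * (1 / (1 + norm x)^m)" and C: "0 \<le> C"
    and e: "norm e \<le> 1" and h: "0 < h" "h \<le> 1"
  shows "norm (f (\<theta> + h *\<^sub>R e) - f \<theta>) \<le> h * (C * 2^m * (1 / (1 + norm \<theta>)^m))"
proof -
  let ?g = "\<lambda>t. f (\<theta> + t *\<^sub>R e)"
  have continuous: "continuous_on {0..h} ?g"
    by (intro continuous_at_imp_continuous_on ballI
        has_vector_derivative_continuous[OF has_vector_derivative_along_line[OF der]])
  have derivative: "(?g has_derivative (\<lambda>s. s *\<^sub>R f' (\<theta> + t *\<^sub>R e))) (at t)" for t
    using has_vector_derivative_along_line[OF der, of \<theta> t] unfolding has_vector_derivative_def .
  obtain \<tau> where \<tau>: "\<tau> \<in> {0<..<h}"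
      "norm (?g h - ?g 0) \<le> norm ((h - 0) *\<^sub>R f' (\<theta> + \<tau> *\<^sub>R e))"
    using mvt_general[OF h(1) continuous derivative] by blast
  let ?y = "\<theta> + \<tau> *\<^sub>R e"
  have "\<tau> \<le> 1" using \<tau>(1) h(2) by simp
  then have "\<tau> * norm e \<le> 1" using e \<tau>(1) by (simp add: mult_le_one)
  moreover have "norm \<theta> \<le> norm ?y + \<tau> * norm e"
    using norm_triangle_ineq4[of ?y "\<tau> *\<^sub>R e"] \<tau>(1) by simp
  ultimately have "1 + norm \<theta> \<le> 2 * (1 + norm ?y)" using norm_ge_zero[of ?y] by (smt (verit))
  then have "(1 + norm \<theta>)^m \<le> (2 * (1 + norm ?y))^m" by (rule power_mono) simp
  then have "(1 + norm \<theta>)^m \<le> 2^m * (1 + norm ?y)^m" by (simp only: power_mult_distrib)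
  moreover have "0 < (1 + norm \<theta>)^m" "0 < (1 + norm ?y)^m" by (simp_all add: add_pos_nonneg)
  ultimately have "1 / (1 + norm ?y)^m \<le> 2^m * (1 / (1 + norm \<theta>)^m)"
    by (simp add: field_simps)
  then have "norm (f' ?y) \<le> C * (2^m * (1 / (1 + norm \<theta>)^m))"
    using bound[of ?y] C by (meson mult_left_mono order_trans)
  then have "h * norm (f' ?y) \<le> h * (C * (2^m * (1 / (1 + norm \<theta>)^m)))"
    using h(1) by (intro mult_left_mono) auto
  with \<tau>(2) h(1) show ?thesis by (simp add: mult_ac)
qed

lemma fourier_integral_difference_quotient_LIMSEQ:
  fixes f :: "'a::euclidean_space \<Rightarrow> complex"
  assumes f: "integrable lborel (\<lambda>\<theta>. fourier_kernel z \<theta> * f \<theta>)"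
  shows "(\<lambda>k. \<integral>\<theta>. fourier_kernel z \<theta> * (of_real (real (Suc k)) * (f (\<theta> + (1 / real (Suc k)) *\<^sub>R e) - f \<theta>)) \<partial>lborel)
           \<longlonglongrightarrow> \<i> * complex_of_real (z \<bullet> e) * (\<integral>\<theta>. fourier_kernel z \<theta> * f \<theta> \<partial>lborel)"
proof -
  let ?h = "\<lambda>k::nat. 1 / real (Suc k)"
  let ?I = "\<integral>\<theta>. fourier_kernel z \<theta> * f \<theta> \<partial>lborel"
  have "(\<integral>\<theta>. fourier_kernel z \<theta> * (of_real (real (Suc k)) * (f (\<theta> + ?h k *\<^sub>R e) - f \<theta>)) \<partial>lborel)
      = of_real (real (Suc k)) * (exp (\<i> * complex_of_real (?h k * (z \<bullet> e))) - 1) * ?I" for k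
  proof -
    have "(\<integral>\<theta>. fourier_kernel z \<theta> * (of_real (real (Suc k)) * (f (\<theta> + ?h k *\<^sub>R e) - f \<theta>)) \<partial>lborel)
        = (\<integral>\<theta>. of_real (real (Suc k))
          * (fourier_kernel z \<theta> * f (\<theta> + ?h k *\<^sub>R e) - fourier_kernel z \<theta> * f \<theta>) \<partial>lborel)"
      by (simp add: algebra_simps)
    also have "\<dots> = of_real (real (Suc k)) * ((\<integral>\<theta>. fourier_kernel z \<theta> * f (\<theta> + ?h k *\<^sub>R e) \<partial>lborel) - ?I)"
      by (simp add: integral_mult_right_zero Bochner_Integration.integral_diff
          [OF fourier_integral_translate(1)[OF f] f])
    finally show ?thesis
      by (simp add: fourier_integral_translate(2)[OF f] algebra_simps)
  qed
  then show ?thesis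
    using tendsto_mult_right[OF has_vector_derivative_imp_difference_quotient_LIMSEQ
        [OF has_vector_derivative_iexp_linear[of "z \<bullet> e"]], of ?I]
    by (simp add: mult.assoc)
qed

text \<open>Integration by parts against the Fourier kernel: the difference quotients along \<open>e\<close>
  converge under the integral by dominated convergence.\<close>
lemma fourier_integral_directional_derivative:
  fixes f f' :: "'a::euclidean_space \<Rightarrow> complex"
  assumes f: "fast_decay f" and f': "fast_decay f'" and e: "norm e \<le> 1"
    and der: "\<And>x. ((\<lambda>t. f (x + t *\<^sub>R e)) has_vector_derivative f' x) (at 0)"
  shows "(\<integral>\<theta>. fourier_kernel z \<theta> * f' \<theta> \<partial>lborel)
           = \<i> * complex_of_real (z \<bullet> e) * (\<integral>\<theta>. fourier_kernel z \<theta> * f \<theta> \<partial>lborel)"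
proof -
  let ?h = "\<lambda>k::nat. 1 / real (Suc k)"
  let ?q = "\<lambda>k \<theta>. fourier_kernel z \<theta> * (of_real (real (Suc k)) * (f (\<theta> + ?h k *\<^sub>R e) - f \<theta>))"
  have [measurable]: "f \<in> borel_measurable borel" "f' \<in> borel_measurable borel"
    using fast_decay_measurable f f' by blast+
  obtain C where C: "C \<ge> 0" "\<And>x. norm (f' x) \<le> C * (1 / (1 + norm x)^(2*DIM('a)))"
    using fast_decay_bound[OF f'] by blast
  let ?w = "\<lambda>\<theta>::'a. C * 2^(2*DIM('a)) * (1 / (1 + norm \<theta>)^(2*DIM('a)))"
  have "norm (?q k \<theta>) \<le> ?w \<theta>" for k \<theta>
  proof -
    have "norm (?q k \<theta>) = real (Suc k) * norm (f (\<theta> + ?h k *\<^sub>R e) - f \<theta>)"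
      by (simp only: norm_mult norm_fourier_kernel norm_of_real abs_of_nat mult_1_left)
    also have "\<dots> \<le> real (Suc k) * (?h k * ?w \<theta>)"
      by (intro mult_left_mono difference_quotient_bound[OF der C(2,1) e]) auto
    finally show ?thesis by simp
  qed
  then have lim: "(\<lambda>k. \<integral>\<theta>. ?q k \<theta> \<partial>lborel) \<longlonglongrightarrow> (\<integral>\<theta>. fourier_kernel z \<theta> * f' \<theta> \<partial>lborel)"
  proof (intro integral_dominated_convergence[where w="?w"] AE_I2)
    show "integrable lborel ?w"
      by (intro integrable_mult_right integrable_inverse_power_1_plus_norm)
    show "(\<lambda>k. ?q k \<theta>) \<longlonglongrightarrow> fourier_kernel z \<theta> * f' \<theta>" for \<theta>
      using tendsto_mult_left[OF has_vector_derivative_imp_difference_quotient_LIMSEQ[OF der[of \<theta>]]]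
      by simp
  qed auto
  from LIMSEQ_unique[OF lim fourier_integral_difference_quotient_LIMSEQ[OF fast_decay_integrable_fourier_kernel[OF f]]]
  show ?thesis .
qed
section \<open>Fourier transforms of Schwartz functions\<close>

lemma schwartz_fast_decay:
  assumes "schwartz (f :: real^'n \<Rightarrow> complex)"
  shows "fast_decay (iter_partial is f)"
  using assms unfolding schwartz_def fast_decay_def by auto

lemma schwartz_has_partial_derivative:
  assumes "schwartz (f :: real^'n \<Rightarrow> complex)"
  shows "((\<lambda>t. iter_partial is f (x + t *\<^sub>R axis j 1)) has_vector_derivative iter_partial (j # is) f x) (at 0)"
proof -
  have "(\<lambda>t. iter_partial is f (x + t *\<^sub>R axis j 1)) differentiable (at 0)"
    using assms unfolding schwartz_def by blast
  then show ?thesis by (simp add: vector_derivative_works partial_deriv_def)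
qed

lemma fourier_eq_lebesgue_integral:
  assumes "fast_decay (f :: real^'n \<Rightarrow> complex)"
  shows "fourier f z = complex_of_real ((2*pi) powr (- real CARD('n)/2))
           * (\<integral>\<theta>. fourier_kernel z \<theta> * f \<theta> \<partial>lborel)"
  unfolding fourier_def
  using integral_lborel[OF fast_decay_integrable_fourier_kernel[OF assms, of z]]
  by (simp add: fourier_kernel_def)

lemma fourier_integral_iter_partial:
  assumes f: "schwartz (f :: real^'n \<Rightarrow> complex)"
  shows "(\<integral>\<theta>. fourier_kernel z \<theta> * iter_partial is f \<theta> \<partial>lborel)
           = prod_list (map (\<lambda>j. \<i> * complex_of_real (z $ j)) is) * (\<integral>\<theta>. fourier_kernel z \<theta> * f \<theta> \<partial>lborel)"
proof (induction "is")
  case Nil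
  then show ?case by simp
next
  case (Cons j "is")
  have "(\<integral>\<theta>. fourier_kernel z \<theta> * iter_partial (j # is) f \<theta> \<partial>lborel)
      = \<i> * complex_of_real (z \<bullet> axis j 1) * (\<integral>\<theta>. fourier_kernel z \<theta> * iter_partial is f \<theta> \<partial>lborel)"
    by (rule fourier_integral_directional_derivative[OF schwartz_fast_decay[OF f] schwartz_fast_decay[OF f]])
       (use schwartz_has_partial_derivative[OF f, of "is"] in simp_all)
  then show ?case using Cons.IH by (simp add: inner_axis mult_ac)
qed

lemma norm_fourier_integral_mult_prod_square_le:
  assumes f: "schwartz (f :: real^'n \<Rightarrow> complex)" and "distinct js"
  shows "(\<Prod>j\<in>set js. (z $ j)\<^sup>2) * norm (\<integral>\<theta>. fourier_kernel z \<theta> * f \<theta> \<partial>lborel)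
           \<le> (\<integral>\<theta>. norm (iter_partial (js @ js) f \<theta>) \<partial>lborel)"
proof -
  let ?m = "\<lambda>j. \<i> * complex_of_real (z $ j)"
  have "prod_list (map ?m (js @ js)) = (prod ?m (set js))\<^sup>2"
    using prod.distinct_set_conv_list[OF assms(2), of ?m] by (simp add: power2_eq_square)
  moreover have "norm (prod ?m (set js)) = (\<Prod>j\<in>set js. \<bar>z $ j\<bar>)"
    by (simp add: prod_norm[symmetric] norm_mult)
  ultimately have "norm (prod_list (map ?m (js @ js))) = (\<Prod>j\<in>set js. \<bar>z $ j\<bar>)\<^sup>2"
    by (simp add: norm_power)
  then have "norm (prod_list (map ?m (js @ js))) = (\<Prod>j\<in>set js. (z $ j)\<^sup>2)"
    by (simp add: prod_power_distrib)
  then have "(\<Prod>j\<in>set js. (z $ j)\<^sup>2) * norm (\<integral>\<theta>. fourier_kernel z \<theta> * f \<theta> \<partial>lborel)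
      = norm (\<integral>\<theta>. fourier_kernel z \<theta> * iter_partial (js @ js) f \<theta> \<partial>lborel)"
    by (simp add: fourier_integral_iter_partial[OF f] norm_mult)
  also have "\<dots> \<le> (\<integral>\<theta>. norm (fourier_kernel z \<theta> * iter_partial (js @ js) f \<theta>) \<partial>lborel)"
    by (rule integral_norm_bound)
  finally show ?thesis by (simp add: norm_mult)
qed

text \<open>Expanding \<open>\<Prod>\<^sub>j (1 + z\<^sub>j\<^sup>2)\<close> into the sum over subsets \<open>S\<close> of \<open>\<Prod>\<^sub>j\<^sub>\<in>\<^sub>S z\<^sub>j\<^sup>2\<close>, each term is
  controlled by the integral of the derivative \<open>\<Prod>\<^sub>j\<^sub>\<in>\<^sub>S \<partial>\<^sub>j\<^sup>2 f\<close>.\<close>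
lemma fourier_integral_schwartz_bound:
  assumes f: "schwartz (f :: real^'n \<Rightarrow> complex)"
  obtains M where "\<And>z. norm (\<integral>\<theta>. fourier_kernel z \<theta> * f \<theta> \<partial>lborel) \<le> M * (\<Prod>j\<in>UNIV. inverse (1 + (z $ j)\<^sup>2))"
proof -
  have "\<exists>list_of :: 'n set \<Rightarrow> 'n list. \<forall>S. set (list_of S) = S \<and> distinct (list_of S)"
    by (intro choice allI finite_distinct_list finite)
  then obtain list_of :: "'n set \<Rightarrow> 'n list"
    where list_of: "\<forall>S. set (list_of S) = S \<and> distinct (list_of S)"
    by blast
  define M where "M = (\<Sum>S\<in>Pow (UNIV::'n set).
      \<integral>\<theta>. norm (iter_partial (list_of S @ list_of S) f \<theta>) \<partial>lborel)"
  let ?J = "\<lambda>z. norm (\<integral>\<theta>. fourier_kernel z \<theta> * f \<theta> \<partial>lborel)"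
  have "?J z \<le> M * (\<Prod>j\<in>UNIV. inverse (1 + (z $ j)\<^sup>2))" for z
  proof -
    have "(\<Prod>j\<in>UNIV. 1 + (z $ j)\<^sup>2) = (\<Sum>S\<in>Pow (UNIV::'n set). \<Prod>j\<in>S. (z $ j)\<^sup>2)"
      using prod_add[of "UNIV::'n set" "\<lambda>j. (z $ j)\<^sup>2" "\<lambda>_. 1"] by (simp add: add.commute)
    then have "(\<Prod>j\<in>UNIV. 1 + (z $ j)\<^sup>2) * ?J z = (\<Sum>S\<in>Pow (UNIV::'n set). (\<Prod>j\<in>S. (z $ j)\<^sup>2) * ?J z)"
      by (simp add: sum_distrib_right)
    also have "\<dots> \<le> M"
      unfolding M_def
    proof (rule sum_mono)
      fix S :: "'n set"
      show "(\<Prod>j\<in>S. (z $ j)\<^sup>2) * ?J z \<le> (\<integral>\<theta>. norm (iter_partial (list_of S @ list_of S) f \<theta>) \<partial>lborel)"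
        using norm_fourier_integral_mult_prod_square_le[OF f, of "list_of S" z] list_of by metis
    qed
    finally have "(\<Prod>j\<in>UNIV. 1 + (z $ j)\<^sup>2) * ?J z \<le> M" .
    moreover have "0 < (\<Prod>j\<in>UNIV. 1 + (z $ j)\<^sup>2)" by (intro prod_pos) (auto intro: add_pos_nonneg)
    ultimately have "?J z \<le> M / (\<Prod>j\<in>UNIV. 1 + (z $ j)\<^sup>2)" by (simp add: field_simps)
    then show ?thesis by (simp add: divide_inverse prod_inversef[symmetric])
  qed
  then show ?thesis using that by blast
qed

lemma integrable_fourier_schwartz:
  assumes f: "schwartz (f :: real^'n \<Rightarrow> complex)"
  shows "integrable lborel (fourier f)"
proof -
  obtain M where M: "\<And>z. norm (\<integral>\<theta>. fourier_kernel z \<theta> * f \<theta> \<partial>lborel) \<le> M * (\<Prod>j\<in>UNIV. inverse (1 + (z $ j)\<^sup>2))"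
    using fourier_integral_schwartz_bound[OF f] by blast
  have decay: "fast_decay f" using schwartz_fast_decay[OF f, of "[]"] by simp
  have "(\<lambda>z::real^'n. \<Prod>b\<in>Basis. inverse (1 + (z \<bullet> b)\<^sup>2)) = (\<lambda>z. \<Prod>j\<in>UNIV. inverse (1 + (z $ j)\<^sup>2))"
    by (rule ext) (rule prod_Basis_vec)
  then have "integrable lborel (\<lambda>z::real^'n. M * (\<Prod>j\<in>UNIV. inverse (1 + (z $ j)\<^sup>2)))"
    using integrable_mult_right[OF integrable_inverse_prod_1_plus_square, of M] by metis
  then have "integrable lborel (\<lambda>z. \<integral>\<theta>. fourier_kernel z \<theta> * f \<theta> \<partial>lborel)"
    by (rule Bochner_Integration.integrable_bound)
       (use measurable_fourier_integral[OF decay] M in \<open>auto intro: order_trans[OF _ abs_ge_self]\<close>)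
  then show ?thesis
    unfolding fourier_eq_lebesgue_integral[OF decay] by (rule integrable_mult_right)
qed
section \<open>Gaussian damping of the Fourier transform\<close>

text \<open>Applying \<open>A\<close> to the Gaussian \<open>y \<mapsto> exp (- c |y|\<^sup>2)\<close> gives this integral at \<open>s = c g(x)\<^sup>2\<close>.\<close>
definition damped_integral :: "(real^'n::finite \<Rightarrow> complex) \<Rightarrow> real \<Rightarrow> complex" where
  "damped_integral \<Psi> s = (\<integral>z. complex_of_real (exp (- s * (z \<bullet> z))) * fourier \<Psi> z \<partial>lborel)"

lemma integrable_damped_fourier:
  assumes \<Psi>: "schwartz (\<Psi> :: real^'n \<Rightarrow> complex)" and s: "0 \<le> s"
  shows "integrable lborel (\<lambda>z. complex_of_real (exp (- s * (z \<bullet> z))) * fourier \<Psi> z)"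
proof (rule Bochner_Integration.integrable_bound[OF integrable_norm[OF integrable_fourier_schwartz[OF \<Psi>]]])
  have [measurable]: "fourier \<Psi> \<in> borel_measurable borel"
    using integrable_fourier_schwartz[OF \<Psi>] by (simp add: borel_measurable_integrable)
  show "(\<lambda>z. complex_of_real (exp (- s * (z \<bullet> z))) * fourier \<Psi> z) \<in> borel_measurable lborel"
    by measurable
  have "exp (- s * (z \<bullet> z)) \<le> 1" for z :: "real^'n" using s by (simp add: mult_nonneg_nonneg)
  then show "AE z in lborel. norm (complex_of_real (exp (- s * (z \<bullet> z))) * fourier \<Psi> z) \<le> norm (norm (fourier \<Psi> z))"
    by (intro AE_I2) (simp add: norm_mult mult_left_le_one_le)
qed

lemma damped_integral_continuous_at_0:
  assumes \<Psi>: "schwartz (\<Psi> :: real^'n \<Rightarrow> complex)"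
    and s: "\<And>k. 0 \<le> s k" "s \<longlonglongrightarrow> 0"
  shows "(\<lambda>k. damped_integral \<Psi> (s k)) \<longlonglongrightarrow> damped_integral \<Psi> 0"
  unfolding damped_integral_def
proof (rule integral_dominated_convergence[where w="\<lambda>z. norm (fourier \<Psi> z)"])
  have [measurable]: "fourier \<Psi> \<in> borel_measurable borel"
    using integrable_fourier_schwartz[OF \<Psi>] by (simp add: borel_measurable_integrable)
  show "(\<lambda>z. complex_of_real (exp (- 0 * (z \<bullet> z))) * fourier \<Psi> z) \<in> borel_measurable lborel"
    by measurable
  show "(\<lambda>z. complex_of_real (exp (- s k * (z \<bullet> z))) * fourier \<Psi> z) \<in> borel_measurable lborel" for k
    by measurable
  show "integrable lborel (\<lambda>z. norm (fourier \<Psi> z))"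
    by (rule integrable_norm[OF integrable_fourier_schwartz[OF \<Psi>]])
  show "AE z in lborel. (\<lambda>k. complex_of_real (exp (- s k * (z \<bullet> z))) * fourier \<Psi> z)
      \<longlonglongrightarrow> complex_of_real (exp (- 0 * (z \<bullet> z))) * fourier \<Psi> z"
    using s(2) by (intro AE_I2 tendsto_intros)
  have "exp (- s k * (z \<bullet> z)) \<le> 1" for k and z :: "real^'n" using s(1)[of k] by (simp add: mult_nonneg_nonneg)
  then show "AE z in lborel. norm (complex_of_real (exp (- s k * (z \<bullet> z))) * fourier \<Psi> z) \<le> norm (fourier \<Psi> z)" for k
    by (intro AE_I2) (simp add: norm_mult mult_left_le_one_le)
qed

lemma heat_kernel_integral_rescale:
  fixes f :: "'a::euclidean_space \<Rightarrow> complex"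
  assumes s: "0 < s"
  shows "(\<integral>\<theta>. complex_of_real (sqrt (pi / s) ^ DIM('a) * exp (- (\<theta> \<bullet> \<theta>) / (4 * s))) * f \<theta> \<partial>lborel)
           = complex_of_real ((2 * sqrt pi) ^ DIM('a))
             * (\<integral>\<eta>. complex_of_real (exp (- (\<eta> \<bullet> \<eta>))) * f ((2 * sqrt s) *\<^sub>R \<eta>) \<partial>lborel)"
proof -
  define c where "c = 2 * sqrt s"
  have c: "c > 0" using s by (simp add: c_def)
  have rescale: "(c *\<^sub>R \<eta>) \<bullet> (c *\<^sub>R \<eta>) / (4 * s) = \<eta> \<bullet> \<eta>" for \<eta> :: 'a
  proof -
    have "sqrt s * sqrt s = s" using s by simp
    then show ?thesis using s by (simp add: c_def mult.assoc[symmetric])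
  qed
  have "(\<integral>\<theta>. complex_of_real (sqrt (pi / s) ^ DIM('a) * exp (- (\<theta> \<bullet> \<theta>) / (4 * s))) * f \<theta> \<partial>lborel)
      = (\<bar>c\<bar> ^ DIM('a)) *\<^sub>R (\<integral>\<eta>. complex_of_real (sqrt (pi / s) ^ DIM('a)
          * exp (- ((0 + c *\<^sub>R \<eta>) \<bullet> (0 + c *\<^sub>R \<eta>)) / (4 * s))) * f (0 + c *\<^sub>R \<eta>) \<partial>lborel)"
    using c by (intro lborel_integral_affine) simp
  also have "\<dots> = (c ^ DIM('a)) *\<^sub>R (\<integral>\<eta>. complex_of_real (sqrt (pi / s) ^ DIM('a))
      * (complex_of_real (exp (- (\<eta> \<bullet> \<eta>))) * f (c *\<^sub>R \<eta>)) \<partial>lborel)"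
    using c by (simp add: rescale minus_divide_left[symmetric] mult.assoc
        del: inner_scaleR_left inner_scaleR_right)
  also have "\<dots> = complex_of_real ((c * sqrt (pi / s)) ^ DIM('a))
      * (\<integral>\<eta>. complex_of_real (exp (- (\<eta> \<bullet> \<eta>))) * f (c *\<^sub>R \<eta>) \<partial>lborel)"
    by (simp add: integral_mult_right_zero scaleR_conv_of_real power_mult_distrib)
  also have "c * sqrt (pi / s) = 2 * sqrt pi"
    using s by (simp add: c_def real_sqrt_divide)
  finally show ?thesis by (simp add: c_def)
qed

text \<open>Fubini and the Fourier transform of the Gaussian turn the damped integral into the
  convolution of \<open>\<Psi>\<close> with the heat kernel at time \<open>s\<close>, evaluated at the origin.\<close>
lemma damped_integral_eq_heat_kernel_integral:
  assumes \<Psi>: "schwartz (\<Psi> :: real^'n \<Rightarrow> complex)" and s: "0 < s"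
  shows "damped_integral \<Psi> s = complex_of_real ((2*pi) powr (- real CARD('n)/2))
           * (\<integral>\<theta>. complex_of_real (sqrt (pi / s) ^ CARD('n) * exp (- (\<theta> \<bullet> \<theta>) / (4 * s))) * \<Psi> \<theta> \<partial>lborel)"
proof -
  have decay: "fast_decay \<Psi>" using schwartz_fast_decay[OF \<Psi>, of "[]"] by simp
  have [measurable]: "\<Psi> \<in> borel_measurable borel" using fast_decay_measurable[OF decay] .
  let ?G = "\<lambda>z::real^'n. complex_of_real (exp (- s * (z \<bullet> z)))"
  let ?F = "\<lambda>z \<theta>. ?G z * (fourier_kernel z \<theta> * \<Psi> \<theta>)"
  let ?\<kappa> = "complex_of_real ((2*pi) powr (- real CARD('n)/2))"
  have "damped_integral \<Psi> s = (\<integral>z. ?\<kappa> * (?G z * (\<integral>\<theta>. fourier_kernel z \<theta> * \<Psi> \<theta> \<partial>lborel)) \<partial>lborel)"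
    unfolding damped_integral_def fourier_eq_lebesgue_integral[OF decay] by (simp only: mult_ac)
  also have "\<dots> = ?\<kappa> * (\<integral>z. (\<integral>\<theta>. ?F z \<theta> \<partial>lborel) \<partial>lborel)"
    by (simp add: integral_mult_right_zero)
  finally have "damped_integral \<Psi> s = ?\<kappa> * (\<integral>z. (\<integral>\<theta>. ?F z \<theta> \<partial>lborel) \<partial>lborel)" .
  moreover have integrable_F: "integrable (lborel \<Otimes>\<^sub>M lborel) (case_prod ?F)"
  proof (rule lborel_pair.Fubini_integrable)
    show "case_prod ?F \<in> borel_measurable (lborel \<Otimes>\<^sub>M lborel)"
      unfolding case_prod_beta by measurable
    have "(\<lambda>z. \<integral>\<theta>. norm (case_prod ?F (z, \<theta>)) \<partial>lborel)
        = (\<lambda>z. exp (- s * (z \<bullet> z)) * (\<integral>\<theta>. norm (\<Psi> \<theta>) \<partial>lborel))"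
      by (simp add: norm_mult integral_mult_right_zero)
    moreover have "integrable lborel (\<lambda>z::real^'n. exp (- s * (z \<bullet> z)) * (\<integral>\<theta>. norm (\<Psi> \<theta>) \<partial>lborel))"
      by (intro integrable_mult_left gaussian_integral(1)[OF s])
    ultimately show "integrable lborel (\<lambda>z. \<integral>\<theta>. norm (case_prod ?F (z, \<theta>)) \<partial>lborel)" by simp
    show "AE z in lborel. integrable lborel (\<lambda>\<theta>. case_prod ?F (z, \<theta>))"
      by (intro AE_I2) (simp add: integrable_mult_right fast_decay_integrable_fourier_kernel[OF decay])
  qed
  then have "(\<integral>z. (\<integral>\<theta>. ?F z \<theta> \<partial>lborel) \<partial>lborel) = (\<integral>\<theta>. (\<integral>z. ?F z \<theta> \<partial>lborel) \<partial>lborel)"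
    using lborel_pair.Fubini_integral[OF integrable_F] by simp
  moreover have "(\<integral>z. ?F z \<theta> \<partial>lborel)
      = complex_of_real (sqrt (pi / s) ^ CARD('n) * exp (- (\<theta> \<bullet> \<theta>) / (4 * s))) * \<Psi> \<theta>" for \<theta>
  proof -
    have "(\<integral>z. ?F z \<theta> \<partial>lborel) = (\<integral>z. ?G z * fourier_kernel \<theta> z \<partial>lborel) * \<Psi> \<theta>"
      by (simp add: integral_mult_left_zero[symmetric] fourier_kernel_commute[of _ \<theta>] mult_ac)
    then show ?thesis
      using gaussian_fourier_integral(2)[OF s, of \<theta>] by (simp add: fourier_kernel_def)
  qed
  ultimately show ?thesis by simp
qed

lemma damped_integral_eq_gaussian_average:
  assumes \<Psi>: "schwartz (\<Psi> :: real^'n \<Rightarrow> complex)" and s: "0 < s"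
  shows "damped_integral \<Psi> s = complex_of_real ((2*pi) powr (- real CARD('n)/2))
           * (complex_of_real ((2 * sqrt pi) ^ CARD('n))
             * (\<integral>\<eta>. complex_of_real (exp (- (\<eta> \<bullet> \<eta>))) * \<Psi> ((2 * sqrt s) *\<^sub>R \<eta>) \<partial>lborel))"
proof -
  have dim: "DIM(real^'n) = CARD('n)" by simp
  show ?thesis
    unfolding damped_integral_eq_heat_kernel_integral[OF \<Psi> s]
      heat_kernel_integral_rescale[OF s, of \<Psi>, unfolded dim]
    by (rule refl)
qed

lemma gaussian_average_dilation_LIMSEQ:
  fixes f :: "'a::euclidean_space \<Rightarrow> complex"
  assumes f: "continuous_on UNIV f" and B: "\<And>x. norm (f x) \<le> B" and c: "c \<longlonglongrightarrow> 0"
  shows "(\<lambda>k. \<integral>\<eta>. complex_of_real (exp (- (\<eta> \<bullet> \<eta>))) * f (c k *\<^sub>R \<eta>) \<partial>lborel)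
           \<longlonglongrightarrow> complex_of_real (sqrt pi ^ DIM('a)) * f 0"
proof -
  have [measurable]: "f \<in> borel_measurable borel" using f by (rule borel_measurable_continuous_onI)
  have "(\<lambda>k. \<integral>\<eta>. complex_of_real (exp (- (\<eta> \<bullet> \<eta>))) * f (c k *\<^sub>R \<eta>) \<partial>lborel)
      \<longlonglongrightarrow> (\<integral>\<eta>. complex_of_real (exp (- (\<eta> \<bullet> \<eta>))) * f (0 *\<^sub>R \<eta>) \<partial>lborel)"
  proof (rule integral_dominated_convergence[where w="\<lambda>\<eta>. B * exp (- (\<eta> \<bullet> \<eta>))"])
    show "integrable lborel (\<lambda>\<eta>::'a. B * exp (- (\<eta> \<bullet> \<eta>)))"
      using gaussian_integral(1)[of 1, where 'a='a] by (intro integrable_mult_right) simp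
    show "AE \<eta> in lborel. (\<lambda>k. complex_of_real (exp (- (\<eta> \<bullet> \<eta>))) * f (c k *\<^sub>R \<eta>))
        \<longlonglongrightarrow> complex_of_real (exp (- (\<eta> \<bullet> \<eta>))) * f (0 *\<^sub>R \<eta>)"
    proof (rule AE_I2)
      fix \<eta> :: 'a
      have "isCont f (0 *\<^sub>R \<eta>)" using f by (simp add: continuous_on_eq_continuous_at)
      then show "(\<lambda>k. complex_of_real (exp (- (\<eta> \<bullet> \<eta>))) * f (c k *\<^sub>R \<eta>))
          \<longlonglongrightarrow> complex_of_real (exp (- (\<eta> \<bullet> \<eta>))) * f (0 *\<^sub>R \<eta>)"
        by (intro tendsto_mult_left isCont_tendsto_compose[where g=f] tendsto_scaleR c tendsto_const)
    qed
    show "AE \<eta> in lborel. norm (complex_of_real (exp (- (\<eta> \<bullet> \<eta>))) * f (c k *\<^sub>R \<eta>)) \<le> B * exp (- (\<eta> \<bullet> \<eta>))" for k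
      using B by (intro AE_I2) (simp add: norm_mult mult.commute mult_left_mono)
  qed simp_all
  moreover have "(\<integral>\<eta>. exp (- (\<eta> \<bullet> \<eta>)) \<partial>(lborel::'a measure)) = sqrt pi ^ DIM('a)"
    using gaussian_integral(2)[of 1, where 'a='a] by simp
  ultimately show ?thesis by simp
qed

lemma gaussian_normalization_constant:
  "(2*pi) powr (- real n/2) * ((2 * sqrt pi) ^ n * sqrt pi ^ n) = (2*pi) powr (real n/2)"
proof -
  have "(2 * sqrt pi) ^ n * sqrt pi ^ n = (2 * sqrt pi * sqrt pi) ^ n"
    by (rule power_mult_distrib[symmetric])
  also have "\<dots> = (2*pi) powr real n"
    by (simp add: powr_realpow mult.assoc)
  finally have "(2*pi) powr (- real n/2) * ((2 * sqrt pi) ^ n * sqrt pi ^ n)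
      = (2*pi) powr (- real n/2) * (2*pi) powr real n"
    by (simp only:)
  also have "\<dots> = (2*pi) powr (real n/2)"
    by (simp flip: powr_add)
  finally show ?thesis .
qed

lemma damped_integral_LIMSEQ:
  assumes \<Psi>: "schwartz (\<Psi> :: real^'n \<Rightarrow> complex)"
  shows "(\<lambda>k. damped_integral \<Psi> (1 / real (Suc k)))
           \<longlonglongrightarrow> complex_of_real ((2*pi) powr (real CARD('n)/2)) * \<Psi> 0"
proof -
  let ?s = "\<lambda>k::nat. 1 / real (Suc k)"
  let ?average = "\<lambda>k. \<integral>\<eta>. complex_of_real (exp (- (\<eta> \<bullet> \<eta>))) * \<Psi> ((2 * sqrt (?s k)) *\<^sub>R \<eta>) \<partial>lborel"
  have continuous: "continuous_on UNIV \<Psi>"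
    using schwartz_fast_decay[OF \<Psi>, of "[]"] by (simp add: fast_decay_def)
  obtain B where "\<And>x. (1 + norm x)^0 * norm (iter_partial [] \<Psi> x) \<le> B"
    using \<Psi> unfolding schwartz_def by blast
  then have bounded: "\<And>x. norm (\<Psi> x) \<le> B" by simp
  have "?s \<longlonglongrightarrow> 0" using LIMSEQ_Suc[OF lim_1_over_n[where 'a=real]] by simp
  then have "(\<lambda>k. 2 * sqrt (?s k)) \<longlonglongrightarrow> 0"
    using tendsto_mult[OF tendsto_const[of 2] tendsto_real_sqrt] by fastforce
  from gaussian_average_dilation_LIMSEQ[OF continuous bounded this]
  have average: "?average \<longlonglongrightarrow> complex_of_real (sqrt pi ^ CARD('n)) * \<Psi> 0"
    by simp
  have "(\<lambda>k. damped_integral \<Psi> (?s k)) = (\<lambda>k. complex_of_real ((2*pi) powr (- real CARD('n)/2))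
      * (complex_of_real ((2 * sqrt pi) ^ CARD('n)) * ?average k))"
    by (intro ext damped_integral_eq_gaussian_average[OF \<Psi>]) simp
  moreover have "complex_of_real ((2*pi) powr (real CARD('n)/2)) * \<Psi> 0
      = complex_of_real ((2*pi) powr (- real CARD('n)/2))
        * (complex_of_real ((2 * sqrt pi) ^ CARD('n)) * (complex_of_real (sqrt pi ^ CARD('n)) * \<Psi> 0))"
    by (simp only: of_real_mult mult.assoc flip: gaussian_normalization_constant)
  ultimately show ?thesis
    by (simp only:) (intro tendsto_mult_left average)
qed

lemma fourier_inversion_at_0:
  assumes \<Psi>: "schwartz (\<Psi> :: real^'n \<Rightarrow> complex)"
  shows "(\<integral>z. fourier \<Psi> z \<partial>lborel) = complex_of_real ((2*pi) powr (real CARD('n)/2)) * \<Psi> 0"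
proof -
  have "(\<lambda>k. 1 / real (Suc k)) \<longlonglongrightarrow> 0" using LIMSEQ_Suc[OF lim_1_over_n[where 'a=real]] by simp
  then have "(\<lambda>k. damped_integral \<Psi> (1 / real (Suc k))) \<longlonglongrightarrow> damped_integral \<Psi> 0"
    by (rule damped_integral_continuous_at_0[OF \<Psi>, rotated]) simp
  from LIMSEQ_unique[OF this damped_integral_LIMSEQ[OF \<Psi>]] show ?thesis
    by (simp add: damped_integral_def)
qed

lemma damped_integral_bounded_away_from_0:
  assumes \<Psi>: "schwartz (\<Psi> :: real^'n \<Rightarrow> complex)" and "\<Psi> 0 \<noteq> 0"
  obtains s\<^sub>0 \<delta> where "0 < s\<^sub>0" "0 < \<delta>" "\<And>s. 0 \<le> s \<Longrightarrow> s \<le> s\<^sub>0 \<Longrightarrow> \<delta> \<le> norm (damped_integral \<Psi> s)"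
proof -
  define \<delta> where "\<delta> = norm (damped_integral \<Psi> 0) / 2"
  have "damped_integral \<Psi> 0 = (\<integral>z. fourier \<Psi> z \<partial>lborel)"
    by (simp add: damped_integral_def)
  then have "damped_integral \<Psi> 0 \<noteq> 0"
    using assms by (simp add: fourier_inversion_at_0)
  then have \<delta>: "0 < \<delta>" by (simp add: \<delta>_def)
  have "\<exists>s\<^sub>0>0. \<forall>s. 0 \<le> s \<longrightarrow> s \<le> s\<^sub>0 \<longrightarrow> \<delta> \<le> norm (damped_integral \<Psi> s)"
  proof (rule ccontr)
    assume "\<not> ?thesis"
    then have "\<forall>k::nat. \<exists>s. 0 \<le> s \<and> s \<le> 1 / real (Suc k) \<and> norm (damped_integral \<Psi> s) < \<delta>"
      by (metis not_le of_nat_0_less_iff zero_less_Suc zero_less_divide_1_iff)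
    then obtain s where s: "\<And>k. 0 \<le> s k" "\<And>k. s k \<le> 1 / real (Suc k)"
        "\<And>k. norm (damped_integral \<Psi> (s k)) < \<delta>"
      by metis
    have "s \<longlonglongrightarrow> 0"
    proof (rule real_tendsto_sandwich[where f="\<lambda>_. 0" and h="\<lambda>k. 1 / real (Suc k)"])
      show "(\<lambda>k. 1 / real (Suc k)) \<longlonglongrightarrow> 0"
        using LIMSEQ_Suc[OF lim_1_over_n[where 'a=real]] by simp
    qed (use s in auto)
    from tendsto_norm[OF damped_integral_continuous_at_0[OF \<Psi> s(1) this]]
    have "norm (damped_integral \<Psi> 0) \<le> \<delta>"
      by (rule LIMSEQ_le_const2) (use s(3) in \<open>auto intro: less_imp_le\<close>)
    then show False using \<delta> by (simp add: \<delta>_def)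
  qed
  with \<delta> that show ?thesis by blast
qed
section \<open>Gaussians are Schwartz functions\<close>

inductive_set poly_fun :: "(real^'n::finite \<Rightarrow> complex) set" where
  const: "(\<lambda>_. a) \<in> poly_fun"
| coord: "(\<lambda>y. complex_of_real (y $ (i::'n))) \<in> poly_fun"
| add: "p \<in> poly_fun \<Longrightarrow> q \<in> poly_fun \<Longrightarrow> (\<lambda>y. p y + q y) \<in> poly_fun"
| mult: "p \<in> poly_fun \<Longrightarrow> q \<in> poly_fun \<Longrightarrow> (\<lambda>y. p y * q y) \<in> poly_fun"

lemma continuous_poly_fun: "p \<in> poly_fun \<Longrightarrow> continuous_on UNIV p"
  by (induction rule: poly_fun.induct) (auto intro!: continuous_intros)

lemma poly_fun_partial_derivative:
  fixes p :: "real^'n::finite \<Rightarrow> complex" and j :: 'n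
  shows "p \<in> poly_fun \<Longrightarrow> \<exists>q\<in>poly_fun. \<forall>y. ((\<lambda>t. p (y + t *\<^sub>R axis j 1)) has_vector_derivative q y) (at 0)"
proof (induction rule: poly_fun.induct)
  case (const a)
  show ?case by (intro bexI[of _ "\<lambda>_. 0"] poly_fun.const allI) simp
next
  case (coord i)
  have "((\<lambda>t::real. complex_of_real ((y + t *\<^sub>R axis j 1) $ i)) has_vector_derivative complex_of_real (axis j 1 $ i)) (at 0)" for y
    by (auto intro!: derivative_eq_intros)
  then show ?case by (intro bexI[of _ "\<lambda>_. complex_of_real (axis j 1 $ i)"] poly_fun.const) auto
next
  case (add p q)
  then obtain p' q' where p': "p' \<in> poly_fun" "\<And>y. ((\<lambda>t. p (y + t *\<^sub>R axis j 1)) has_vector_derivative p' y) (at 0)"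
    and q': "q' \<in> poly_fun" "\<And>y. ((\<lambda>t. q (y + t *\<^sub>R axis j 1)) has_vector_derivative q' y) (at 0)" by blast
  show ?case
    by (intro bexI[of _ "\<lambda>y. p' y + q' y"] poly_fun.add p' q' allI has_vector_derivative_add)
next
  case (mult p q)
  then obtain p' q' where p': "p' \<in> poly_fun" "\<And>y. ((\<lambda>t. p (y + t *\<^sub>R axis j 1)) has_vector_derivative p' y) (at 0)"
    and q': "q' \<in> poly_fun" "\<And>y. ((\<lambda>t. q (y + t *\<^sub>R axis j 1)) has_vector_derivative q' y) (at 0)" by blast
  have "((\<lambda>t. p (y + t *\<^sub>R axis j 1) * q (y + t *\<^sub>R axis j 1)) has_vector_derivative (p y * q' y + p' y * q y)) (at 0)" for y
    using has_vector_derivative_mult[OF p'(2)[of y] q'(2)[of y]] by simp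
  then show ?case
    by (intro bexI[of _ "\<lambda>y. p y * q' y + p' y * q y"] poly_fun.add poly_fun.mult p' q' mult.hyps) auto
qed

lemma poly_fun_bound:
  fixes p :: "real^'n::finite \<Rightarrow> complex"
  shows "p \<in> poly_fun \<Longrightarrow> \<exists>C k. 0 \<le> C \<and> (\<forall>y. norm (p y) \<le> C * (1 + norm y)^k)"
proof (induction rule: poly_fun.induct)
  case (const a)
  show ?case by (intro exI[of _ "norm a"] exI[of _ 0]) simp
next
  case (coord i)
  have "norm (complex_of_real (y $ i)) \<le> 1 * (1 + norm y)^1" for y :: "real^'n"
    using component_le_norm_cart[of y i] by simp
  then show ?case by (intro exI[of _ "1::real"] exI[of _ "1::nat"] conjI allI) simp_all
next
  case (add p q)
  then obtain C1 k1 C2 k2 where 1: "0 \<le> C1" "\<And>y. norm (p y) \<le> C1 * (1 + norm y)^k1"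
    and 2: "0 \<le> C2" "\<And>y. norm (q y) \<le> C2 * (1 + norm y)^k2" by blast
  have "norm (p y + q y) \<le> (C1 + C2) * (1 + norm y)^(k1 + k2)" for y
  proof -
    have a: "(1 + norm y)^k1 \<le> (1 + norm y)^(k1 + k2)" "(1 + norm y)^k2 \<le> (1 + norm y)^(k1 + k2)"
      by (intro power_increasing; simp)+
    have "norm (p y + q y) \<le> C1 * (1 + norm y)^k1 + C2 * (1 + norm y)^k2"
      using 1(2)[of y] 2(2)[of y] norm_triangle_ineq[of "p y" "q y"] by linarith
    also have "\<dots> \<le> C1 * (1 + norm y)^(k1 + k2) + C2 * (1 + norm y)^(k1 + k2)"
      using a 1(1) 2(1) by (intro add_mono mult_left_mono) auto
    finally show ?thesis by (simp add: algebra_simps)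
  qed
  then show ?case using 1(1) 2(1) by (intro exI[of _ "C1 + C2"] exI[of _ "k1 + k2"]) auto
next
  case (mult p q)
  then obtain C1 k1 C2 k2 where 1: "0 \<le> C1" "\<And>y. norm (p y) \<le> C1 * (1 + norm y)^k1"
    and 2: "0 \<le> C2" "\<And>y. norm (q y) \<le> C2 * (1 + norm y)^k2" by blast
  have "norm (p y * q y) \<le> (C1 * C2) * (1 + norm y)^(k1 + k2)" for y
  proof -
    have "norm (p y * q y) \<le> (C1 * (1 + norm y)^k1) * (C2 * (1 + norm y)^k2)"
      unfolding norm_mult using 1 2 by (intro mult_mono) auto
    then show ?thesis by (simp add: power_add mult_ac)
  qed
  then show ?case using 1(1) 2(1) by (intro exI[of _ "C1 * C2"] exI[of _ "k1 + k2"]) auto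
qed

lemma power_mult_exp_neg_square_le:
  fixes c r :: real
  assumes c: "0 < c" and r: "0 \<le> r"
  shows "(1 + r)^N * exp (- c * r\<^sup>2) \<le> exp ((real N)\<^sup>2 / (4 * c))"
proof -
  have "(1 + r)^N \<le> exp (real N * r)"
    using r by (simp add: exp_of_nat_mult power_mono)
  then have "(1 + r)^N * exp (- c * r\<^sup>2) \<le> exp (real N * r) * exp (- c * r\<^sup>2)"
    by (rule mult_right_mono) simp
  also have "\<dots> = exp (real N * r - c * r\<^sup>2)" by (simp flip: exp_add)
  also have "real N * r - c * r\<^sup>2 \<le> (real N)\<^sup>2 / (4 * c)"
  proof -
    have "0 \<le> (2 * c * r - real N)\<^sup>2" by simp
    then have "4 * c * (real N * r - c * r\<^sup>2) \<le> (real N)\<^sup>2"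
      by (simp add: power2_eq_square algebra_simps)
    then show ?thesis using c by (simp add: pos_le_divide_eq mult.commute)
  qed
  finally show ?thesis by simp
qed

definition gaussian :: "real \<Rightarrow> real^'n::finite \<Rightarrow> complex" where
  "gaussian c y = complex_of_real (exp (- c * (y \<bullet> y)))"

lemma continuous_gaussian: "continuous_on UNIV (gaussian c)"
  unfolding gaussian_def by (intro continuous_intros)

lemma gaussian_partial_derivative:
  "((\<lambda>t. gaussian c (y + t *\<^sub>R axis j 1)) has_vector_derivative complex_of_real (- 2 * c * (y $ j)) * gaussian c y) (at 0)"
proof -
  have eq: "(\<lambda>t. gaussian c (y + t *\<^sub>R axis j 1)) = (\<lambda>t. complex_of_real (exp (- c * (y \<bullet> y + 2 * t * (y $ j) + t\<^sup>2))))"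
    by (rule ext) (simp add: gaussian_def inner_add_left inner_add_right inner_axis inner_axis' inner_axis_axis
        algebra_simps power2_eq_square)
  have "((\<lambda>t. exp (- c * (y \<bullet> y + 2 * t * (y $ j) + t\<^sup>2))) has_field_derivative
      exp (- c * (y \<bullet> y + 2 * 0 * (y $ j) + 0\<^sup>2)) * (- c * (2 * (y $ j) + 2 * 0))) (at 0)"
    by (auto intro!: derivative_eq_intros)
  then have "((\<lambda>t. complex_of_real (exp (- c * (y \<bullet> y + 2 * t * (y $ j) + t\<^sup>2)))) has_vector_derivative
      complex_of_real (exp (- c * (y \<bullet> y + 2 * 0 * (y $ j) + 0\<^sup>2)) * (- c * (2 * (y $ j) + 2 * 0)))) (at 0)"
    by (rule has_vector_derivative_of_real)
  then show ?thesis
    unfolding eq by (simp add: gaussian_def mult_ac)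
qed

lemma iter_partial_gaussian:
  "\<exists>q\<in>poly_fun. iter_partial is (gaussian c :: real^'n::finite \<Rightarrow> complex) = (\<lambda>y. q y * gaussian c y)"
proof (induction "is")
  case Nil
  show ?case by (intro bexI[of _ "\<lambda>_. 1"] poly_fun.const) auto
next
  case (Cons i "is")
  then obtain q where q: "q \<in> poly_fun" "iter_partial is (gaussian c :: real^'n \<Rightarrow> complex) = (\<lambda>y. q y * gaussian c y)" by blast
  obtain q' where q': "q' \<in> poly_fun" "\<And>y. ((\<lambda>t. q (y + t *\<^sub>R axis i 1)) has_vector_derivative q' y) (at 0)"
    using poly_fun_partial_derivative[OF q(1), of i] by blast
  let ?r = "\<lambda>y. q y * (complex_of_real (- 2 * c) * complex_of_real (y $ i)) + q' y"
  have r: "?r \<in> poly_fun"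
    by (intro poly_fun.add poly_fun.mult poly_fun.const poly_fun.coord q q')
  have "partial_deriv i (\<lambda>y. q y * gaussian c y) = (\<lambda>y. ?r y * gaussian c y)"
  proof (rule ext)
    fix y :: "real^'n"
    have "((\<lambda>t. q (y + t *\<^sub>R axis i 1) * gaussian c (y + t *\<^sub>R axis i 1)) has_vector_derivative
        q y * (complex_of_real (- 2 * c * (y $ i)) * gaussian c y) + q' y * gaussian c y) (at 0)"
      using has_vector_derivative_mult[OF q'(2)[of y] gaussian_partial_derivative[of c y i]] by simp
    then show "partial_deriv i (\<lambda>y. q y * gaussian c y) y = ?r y * gaussian c y"
      unfolding partial_deriv_def by (subst vector_derivative_at) (auto simp: algebra_simps)
  qed
  then show ?case using r q(2) by auto
qed

lemma iter_partial_gaussian_decay: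
  assumes c: "0 < c"
  shows "\<exists>C. \<forall>x. (1 + norm x)^m * norm (iter_partial is (gaussian c :: real^'n::finite \<Rightarrow> complex) x) \<le> C"
proof -
  obtain q where q: "q \<in> poly_fun" "iter_partial is (gaussian c :: real^'n \<Rightarrow> complex) = (\<lambda>y. q y * gaussian c y)"
    using iter_partial_gaussian by blast
  obtain C k where C: "0 \<le> C" "\<And>y. norm (q y) \<le> C * (1 + norm y)^k"
    using poly_fun_bound[OF q(1)] by blast
  have "(1 + norm x)^m * norm (iter_partial is (gaussian c) x) \<le> C * exp ((real (m + k))\<^sup>2 / (4 * c))"
    for x :: "real^'n"
  proof -
    have "norm (gaussian c x) = exp (- c * (norm x)\<^sup>2)" by (simp add: gaussian_def power2_norm_eq_inner)
    then have "(1 + norm x)^m * norm (iter_partial is (gaussian c) x)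
        = (1 + norm x)^m * norm (q x) * exp (- c * (norm x)\<^sup>2)"
      by (simp add: q(2) norm_mult)
    also have "\<dots> \<le> (1 + norm x)^m * (C * (1 + norm x)^k) * exp (- c * (norm x)\<^sup>2)"
      by (intro mult_right_mono mult_left_mono C(2)) auto
    also have "\<dots> = C * ((1 + norm x)^(m + k) * exp (- c * (norm x)\<^sup>2))"
      by (simp add: power_add mult_ac)
    also have "\<dots> \<le> C * exp ((real (m + k))\<^sup>2 / (4 * c))"
      by (intro mult_left_mono power_mult_exp_neg_square_le c C(1)) simp
    finally show ?thesis .
  qed
  then show ?thesis by blast
qed

lemma schwartz_gaussian:
  assumes c: "0 < c"
  shows "schwartz (gaussian c :: real^'n::finite \<Rightarrow> complex)"
  unfolding schwartz_def
proof (intro conjI allI)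
  fix "is" :: "'n list" and i :: 'n and x :: "real^'n"
  obtain q where q: "q \<in> poly_fun" "iter_partial is (gaussian c :: real^'n \<Rightarrow> complex) = (\<lambda>y. q y * gaussian c y)"
    using iter_partial_gaussian by blast
  show "continuous_on UNIV (iter_partial is (gaussian c :: real^'n \<Rightarrow> complex))"
    unfolding q(2) using continuous_poly_fun[OF q(1)] continuous_gaussian by (intro continuous_intros) auto
  obtain q' where q': "\<And>y. ((\<lambda>t. q (y + t *\<^sub>R axis i 1)) has_vector_derivative q' y) (at 0)"
    using poly_fun_partial_derivative[OF q(1), of i] by blast
  show "(\<lambda>t. iter_partial is (gaussian c) (x + t *\<^sub>R axis i 1)) differentiable at 0"
    unfolding q(2)
    by (rule differentiableI_vector, rule has_vector_derivative_mult[OF q' gaussian_partial_derivative])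
qed (rule iter_partial_gaussian_decay[OF c])

lemma L2_norm_sq_gaussian:
  assumes c: "0 < c"
  shows "L2_norm_sq (gaussian c :: real^'n::finite \<Rightarrow> complex) = ennreal (sqrt (pi / (2 * c)) ^ CARD('n))"
proof -
  have "(norm (gaussian c x))\<^sup>2 = exp (- (2 * c) * (x \<bullet> x))" for x :: "real^'n"
    by (simp add: gaussian_def power2_eq_square exp_add[symmetric])
  then show ?thesis
    unfolding L2_norm_sq_def using gaussian_integral(3)[of "2 * c", where 'a="real^'n"] c by simp
qed



lemma gaussian_scaleR: "gaussian c (a *\<^sub>R z) = complex_of_real (exp (- (c * a\<^sup>2) * (z \<bullet> z)))"
  by (simp add: gaussian_def power2_eq_square mult_ac)

lemma integral_dilated_gaussian_fourier:
  assumes \<Psi>: "schwartz (\<Psi> :: real^'n \<Rightarrow> complex)" and c: "0 \<le> c"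
  shows "integral UNIV (\<lambda>z. gaussian c (a *\<^sub>R z) * fourier \<Psi> z) = damped_integral \<Psi> (c * a\<^sup>2)"
  unfolding gaussian_scaleR damped_integral_def
  using c by (intro integral_lborel integrable_damped_fourier[OF \<Psi>]) simp
section \<open>Testing the operator on narrow Gaussians\<close>

lemma L2_norm_sq_gaussian_width:
  assumes w: "0 < w"
  shows "L2_norm_sq (gaussian (pi / (2 * w\<^sup>2)) :: real^'n::finite \<Rightarrow> complex) = ennreal (w ^ CARD('n))"
proof -
  have "sqrt (pi / (2 * (pi / (2 * w\<^sup>2)))) = w" using w by simp
  then show ?thesis using L2_norm_sq_gaussian[of "pi / (2 * w\<^sup>2)", where 'n='n] w by simp
qed

lemma norm_integral_dilated_gaussian_fourier_ge:
  assumes \<Psi>: "schwartz (\<Psi> :: real^'n \<Rightarrow> complex)"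
    and damped: "\<And>s. 0 \<le> s \<Longrightarrow> s \<le> s\<^sub>0 \<Longrightarrow> \<delta> \<le> norm (damped_integral \<Psi> s)"
    and w: "0 < w" and a: "\<bar>a\<bar> \<le> sqrt (2 * s\<^sub>0 / pi) * w" and s\<^sub>0: "0 \<le> s\<^sub>0"
  shows "\<delta> \<le> norm (integral UNIV (\<lambda>z. gaussian (pi / (2 * w\<^sup>2)) (a *\<^sub>R z) * fourier \<Psi> z))"
proof -
  have "a\<^sup>2 \<le> (sqrt (2 * s\<^sub>0 / pi) * w)\<^sup>2"
    using a by (metis abs_le_square_iff abs_of_nonneg abs_ge_zero order_trans)
  also have "\<dots> = (2 * s\<^sub>0 / pi) * w\<^sup>2" using s\<^sub>0 by (simp add: power_mult_distrib)
  finally have "pi / (2 * w\<^sup>2) * a\<^sup>2 \<le> s\<^sub>0"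
    using w by (simp add: field_simps)
  then show ?thesis
    using integral_dilated_gaussian_fourier[OF \<Psi>, of "pi / (2 * w\<^sup>2)" a] damped by simp
qed

lemma cube_subset_open_cube: "r \<le> \<beta> \<Longrightarrow> box 0 ((\<chi> i. r) :: real^'n) \<subseteq> open_cube \<beta>"
  using less_le_trans by (fastforce simp: open_cube_def mem_box_cart)

lemma little_o_norm_on_cube:
  fixes g :: "real^'n \<Rightarrow> real"
  assumes g: "((\<lambda>x. g x / norm x) \<longlongrightarrow> 0) (at 0 within open_cube \<beta>)" and \<beta>: "0 < \<beta>" and \<eta>: "0 < \<eta>"
  obtains r where "0 < r" "r \<le> \<beta>" "\<And>x. x \<in> box 0 (\<chi> i. r) \<Longrightarrow> \<bar>g x\<bar> \<le> \<eta> * r"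
proof -
  define N where "N = real CARD('n)"
  have N: "1 \<le> N" by (simp add: N_def Suc_leI)
  have "\<forall>\<^sub>F x in at 0 within open_cube \<beta>. dist (g x / norm x) 0 < \<eta> / N"
    using g \<eta> N unfolding tendsto_iff by simp
  then obtain \<rho> where \<rho>: "0 < \<rho>"
    and g_small: "\<And>x. x \<in> open_cube \<beta> \<Longrightarrow> x \<noteq> 0 \<Longrightarrow> dist x 0 < \<rho> \<Longrightarrow> \<bar>g x\<bar> / norm x < \<eta> / N"
    unfolding eventually_at by (auto simp: abs_divide)
  define r where "r = min \<beta> (\<rho> / (2 * N))"
  have r: "0 < r" "r \<le> \<beta>" "N * r < \<rho>"
    using \<beta> \<rho> N by (auto simp: r_def min_def field_simps)
  have "\<bar>g x\<bar> \<le> \<eta> * r" if x: "x \<in> box 0 (\<chi> i. r)" for x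
  proof -
    have xi: "0 < x $ i \<and> x $ i < r" for i using x by (simp add: mem_box_cart)
    then have "x \<noteq> 0" by (metis zero_index less_irrefl)
    have "norm x \<le> (\<Sum>i\<in>UNIV. \<bar>x $ i\<bar>)" by (rule norm_le_l1_cart)
    also have "\<dots> < (\<Sum>i\<in>(UNIV::'n set). r)"
    proof (rule sum_strict_mono)
      show "\<bar>x $ i\<bar> < r" for i using xi[of i] by simp
    qed auto
    finally have norm_x: "norm x < N * r" by (simp add: N_def)
    then have "\<bar>g x\<bar> / norm x < \<eta> / N"
      using g_small cube_subset_open_cube[OF r(2)] x \<open>x \<noteq> 0\<close> r(3) by auto
    then have "\<bar>g x\<bar> < \<eta> / N * norm x" using \<open>x \<noteq> 0\<close> by (simp add: divide_less_eq)
    also have "\<dots> \<le> \<eta> / N * (N * r)" using norm_x \<eta> N by (intro mult_left_mono) auto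
    finally show ?thesis using N by simp
  qed
  with r that show ?thesis by blast
qed

lemma L2_norm_sq_ge_on_cube:
  fixes f :: "real^'n \<Rightarrow> complex"
  assumes r: "0 \<le> r" and \<delta>: "0 \<le> \<delta>" and f: "\<And>x. x \<in> box 0 (\<chi> i. r) \<Longrightarrow> \<delta> \<le> norm (f x)"
  shows "ennreal (\<delta>\<^sup>2 * r ^ CARD('n)) \<le> L2_norm_sq f"
proof -
  let ?Q = "box 0 ((\<chi> i. r) :: real^'n)"
  have "ennreal (\<delta>\<^sup>2 * r ^ CARD('n)) = ennreal (\<delta>\<^sup>2) * emeasure lborel ?Q"
    using emeasure_lborel_cube[OF r, where 'n='n] r by (simp add: ennreal_mult)
  also have "\<dots> = (\<integral>\<^sup>+ x. ennreal (\<delta>\<^sup>2) * indicator ?Q x \<partial>lborel)"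
    by (rule nn_integral_cmult_indicator[symmetric]) simp
  also have "\<dots> \<le> (\<integral>\<^sup>+ x. ennreal ((norm (f x))\<^sup>2) \<partial>lborel)"
  proof (rule nn_integral_mono)
    fix x :: "real^'n"
    show "ennreal (\<delta>\<^sup>2) * indicator ?Q x \<le> ennreal ((norm (f x))\<^sup>2)"
    proof (cases "x \<in> ?Q")
      case True
      then have "\<delta>\<^sup>2 \<le> (norm (f x))\<^sup>2" using f \<delta> by (intro power_mono) auto
      then show ?thesis using True by simp
    qed simp
  qed
  finally show ?thesis by (simp add: L2_norm_sq_def)
qed

lemma cube_estimate_absurd:
  assumes r: "0 < r" and M: "1 \<le> M" "C\<^sup>2 < \<delta>\<^sup>2 * M" and n: "1 \<le> n"
    and le: "ennreal (\<delta>\<^sup>2 * r ^ n) \<le> ennreal (C\<^sup>2) * ennreal ((r / M) ^ n)"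
  shows False
proof -
  have "\<delta>\<^sup>2 * r ^ n \<le> C\<^sup>2 * (r / M) ^ n"
    using le r M by (simp add: ennreal_mult[symmetric] ennreal_le_iff)
  then have "\<delta>\<^sup>2 * M ^ n * r ^ n \<le> C\<^sup>2 * r ^ n"
    using M by (simp add: power_divide field_simps)
  then have "\<delta>\<^sup>2 * M ^ n \<le> C\<^sup>2" using r by simp
  moreover have "\<delta>\<^sup>2 * M \<le> \<delta>\<^sup>2 * M ^ n"
    using M n by (intro mult_left_mono) (auto intro: order_trans[OF _ power_increasing[of 1 n M]])
  ultimately show False using M by simp
qed

theorem mainTheorem2:
  fixes \<beta> :: real
    and \<Psi> :: "real^'n::finite \<Rightarrow> complex"
    and g :: "real^'n \<Rightarrow> real"
    and A :: "(real^'n \<Rightarrow> complex) \<Rightarrow> (real^'n \<Rightarrow> complex)"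
  assumes beta: "0 < \<beta>" "\<beta> < 1"
    and Psi: "schwartz \<Psi>" "\<Psi> 0 = 1"
    and g_cont: "continuous_on (open_cube \<beta>) g"
    and g_nonneg: "\<forall>x\<in>open_cube \<beta>. 0 \<le> g x"
    and g_lim: "((\<lambda>x. g x / norm x) \<longlongrightarrow> 0) (at 0 within open_cube \<beta>)"
    and g_mono: "\<forall>i x y. x \<in> open_cube \<beta> \<longrightarrow> y \<in> open_cube \<beta> \<longrightarrow>
                   (\<forall>j. j \<noteq> i \<longrightarrow> x $ j = y $ j) \<longrightarrow> x $ i \<le> y $ i \<longrightarrow> g x \<le> g y"
    and A_def: "\<forall>u. schwartz u \<longrightarrow> (\<forall>x\<in>open_cube \<beta>.
                   A u x = integral UNIV (\<lambda>z. u (g x *\<^sub>R z) * fourier \<Psi> z))"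
  shows "\<not> (\<exists>C>0. \<forall>u. schwartz u \<longrightarrow>
              L2_norm_sq (A u) \<le> ennreal (C\<^sup>2) * L2_norm_sq u)"
proof
  assume "\<exists>C>0. \<forall>u. schwartz u \<longrightarrow> L2_norm_sq (A u) \<le> ennreal (C\<^sup>2) * L2_norm_sq u"
  then obtain C where bounded: "\<And>u. schwartz u \<Longrightarrow> L2_norm_sq (A u) \<le> ennreal (C\<^sup>2) * L2_norm_sq u"
    by blast
  obtain s\<^sub>0 \<delta> where s\<^sub>0: "0 < s\<^sub>0" and \<delta>: "0 < \<delta>"
    and damped: "\<And>s. 0 \<le> s \<Longrightarrow> s \<le> s\<^sub>0 \<Longrightarrow> \<delta> \<le> norm (damped_integral \<Psi> s)"
    using damped_integral_bounded_away_from_0[OF Psi(1)] Psi(2) by auto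
  define M where "M = C\<^sup>2 / \<delta>\<^sup>2 + 1"
  have M: "1 \<le> M" "C\<^sup>2 < \<delta>\<^sup>2 * M" using \<delta> by (simp_all add: M_def field_simps)
  obtain r where r: "0 < r" "r \<le> \<beta>"
    and g_small: "\<And>x. x \<in> box 0 (\<chi> i. r) \<Longrightarrow> \<bar>g x\<bar> \<le> sqrt (2 * s\<^sub>0 / pi) / M * r"
    using little_o_norm_on_cube[OF g_lim beta(1), of "sqrt (2 * s\<^sub>0 / pi) / M"] s\<^sub>0 M(1) by auto
  define u where "u = (gaussian (pi / (2 * (r / M)\<^sup>2)) :: real^'n \<Rightarrow> complex)"
  have u: "schwartz u" using r M by (simp add: u_def schwartz_gaussian)
  have "\<delta> \<le> norm (A u x)" if x: "x \<in> box 0 (\<chi> i. r)" for x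
  proof -
    have "x \<in> open_cube \<beta>" using cube_subset_open_cube[OF r(2)] x by blast
    then have "A u x = integral UNIV (\<lambda>z. u (g x *\<^sub>R z) * fourier \<Psi> z)"
      using A_def u by blast
    moreover have "\<bar>g x\<bar> \<le> sqrt (2 * s\<^sub>0 / pi) * (r / M)" using g_small[OF x] by simp
    ultimately show ?thesis
      using norm_integral_dilated_gaussian_fourier_ge[OF Psi(1) damped, where w="r / M" and a="g x"] r M s\<^sub>0
      by (simp add: u_def)
  qed
  then have "ennreal (\<delta>\<^sup>2 * r ^ CARD('n)) \<le> L2_norm_sq (A u)"
    using r \<delta> by (intro L2_norm_sq_ge_on_cube) auto
  also have "\<dots> \<le> ennreal (C\<^sup>2) * ennreal ((r / M) ^ CARD('n))"
    using bounded[OF u] r M by (simp add: u_def L2_norm_sq_gaussian_width)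
  finally show False
    using cube_estimate_absurd[OF r(1) M, of "CARD('n)"] by (simp add: Suc_leI)
qed

end
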